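(* Let $X$ be a real Banach space and let $g:X^*\to(-\infty,+\infty]$ be a proper convex weak$^*$-lower semicontinuous function. Let $\varepsilon>0$, $\beta\ge 0$, $x_0^*\in\operatorname{dom} g$, and $x_0\in\partial_\varepsilon g(x_0^* )\cap X$. Then there exist $x_\varepsilon^*\in\operatorname{dom} g$ and $x_\varepsilon\in X$ such that (i) $x_\varepsilon\in\partial g(x_\varepsilon^* )\cap X$; (ii) $\|x_\varepsilon^*-x_0^*\|\le\sqrt{\varepsilon}\,(1+\beta\|x_0^*\|)$; (iii) $|g(x_\varepsilon^* )-g(x_0^* )|\le\sqrt{\varepsilon}\,(\|x_0\|+\beta|\langle x_0^*,x_0\rangle|)+2\varepsilon$; (iv) $\|x_\varepsilon-x_0\|\le\sqrt{\varepsilon}$; (v) $|\langle x_\varepsilon,x^*\rangle-\langle x_0,x^*\rangle|\le\sqrt{\varepsilon}\,\|x^*\|$ for all $x^*\in X^*$; (vi) $x_0\in\partial_{2\varepsilon} g(x_\varepsilon^* )$; (vii) $|\langle x_\varepsilon-x_0,x_\varepsilon^*-x_0^*\rangle|\le\varepsilon$.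
   Context: $X^*$ is the dual of $X$, and $X$ is identified with its canonical image in $X^{**}$. $\operatorname{dom} g=\{x^*\in X^*: g(x^* )<+\infty\}$; "proper" means $g$ never takes the value $-\infty$ and $\operatorname{dom} g\neq\emptyset$. For $x^*\in\operatorname{dom} g$ and $\varepsilon\ge 0$, $\partial_\varepsilon g(x^* )=\{x^{**}\in X^{**}:\langle x^{**},y^*-x^*\rangle\le g(y^* )-g(x^* )+\varepsilon\ \text{for all } y^*\in X^*\}$, and $\partial g=\partial_0 g$; so $\partial_\varepsilon g(x^* )\cap X=\{x\in X:\langle y^*-x^*,x\rangle\le g(y^* )-g(x^* )+\varepsilon\ \forall y^*\in X^*\}$. *)

theory Defs
  imports "HOL-Analysis.Analysis"
begin

text \<open>X is a real Banach space (type 'a::banach); its dual X* is the type of bounded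
linear functionals 'a \<Rightarrow>L real with the operator norm. The pairing of x* with x is
blinfun_apply x* x.\<close>

definition weak_star_topology :: "('a::real_normed_vector \<Rightarrow>\<^sub>L real) topology" where
  "weak_star_topology =
     topology_generated_by {{f. blinfun_apply f x \<in> U} | x U. open (U :: real set)}"

definition proper_fun :: "('b \<Rightarrow> ereal) \<Rightarrow> bool" where
  "proper_fun g \<longleftrightarrow> (\<forall>x. g x \<noteq> -\<infinity>) \<and> (\<exists>x. g x < \<infinity>)"

definition convex_efun :: "('b::real_vector \<Rightarrow> ereal) \<Rightarrow> bool" where
  "convex_efun g \<longleftrightarrow> (\<forall>x y t. 0 \<le> t \<and> t \<le> 1 \<longrightarrow>
      g (t *\<^sub>R x + (1 - t) *\<^sub>R y) \<le> ereal t * g x + ereal (1 - t) * g y)"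

definition weak_star_lsc :: "(('a::real_normed_vector \<Rightarrow>\<^sub>L real) \<Rightarrow> ereal) \<Rightarrow> bool" where
  "weak_star_lsc g \<longleftrightarrow> (\<forall>c::real. closedin weak_star_topology {f. g f \<le> ereal c})"

definition edom :: "('b \<Rightarrow> ereal) \<Rightarrow> 'b set" where
  "edom g = {x. g x < \<infinity>}"

definition eps_subdiff_X ::
  "(('a::real_normed_vector \<Rightarrow>\<^sub>L real) \<Rightarrow> ereal) \<Rightarrow> real \<Rightarrow> ('a \<Rightarrow>\<^sub>L real) \<Rightarrow> 'a set" where
  "eps_subdiff_X g e xs = {x. \<forall>ys. ereal (blinfun_apply (ys - xs) x) \<le> g ys - g xs + ereal e}"

end

theory Submission
  imports Defs
begin

definition weak_star_box ::
  "('a::real_normed_vector \<Rightarrow>\<^sub>L real) \<Rightarrow> 'a list \<Rightarrow> real \<Rightarrow> ('a \<Rightarrow>\<^sub>L real) set" where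
  "weak_star_box y xs d = {y'. \<forall>x\<in>set xs. \<bar>blinfun_apply y' x - blinfun_apply y x\<bar> < d}"

lemma openin_weak_star_topology_box:
  assumes "openin weak_star_topology U" "y \<in> U"
  shows "\<exists>xs d. d > 0 \<and> weak_star_box y xs d \<subseteq> U"
proof -
  have "generate_topology_on {{f. blinfun_apply f x \<in> V} | x V. open (V :: real set)} U"
    using assms(1) unfolding weak_star_topology_def openin_topology_generated_by_iff .
  then show ?thesis using assms(2)
  proof (induction arbitrary: y)
    case Empty
    then show ?case by simp
  next
    case (Int U1 U2)
    obtain xs1 d1 where 1: "d1 > 0" "weak_star_box y xs1 d1 \<subseteq> U1"
      using Int.IH(1) Int.prems by blast
    obtain xs2 d2 where 2: "d2 > 0" "weak_star_box y xs2 d2 \<subseteq> U2"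
      using Int.IH(2) Int.prems by blast
    have "weak_star_box y (xs1 @ xs2) (min d1 d2) \<subseteq> weak_star_box y xs1 d1"
      "weak_star_box y (xs1 @ xs2) (min d1 d2) \<subseteq> weak_star_box y xs2 d2"
      by (auto simp: weak_star_box_def)
    then have "weak_star_box y (xs1 @ xs2) (min d1 d2) \<subseteq> U1 \<inter> U2"
      using 1 2 by blast
    moreover have "min d1 d2 > 0" using 1 2 by simp
    ultimately show ?case by blast
  next
    case (UN K)
    then show ?case by blast
  next
    case (Basis S)
    then obtain x V where S: "S = {f. blinfun_apply f x \<in> V}" "open V" by auto
    have "blinfun_apply y x \<in> V"
      using Basis.prems S by simp
    then obtain e where "e > 0" "ball (blinfun_apply y x) e \<subseteq> V"
      using open_contains_ball_eq[OF S(2)] by blast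
    then have "weak_star_box y [x] e \<subseteq> S"
      by (auto simp: S weak_star_box_def dist_real_def subset_iff abs_minus_commute)
    then show ?case using \<open>e > 0\<close> by blast
  qed
qed

lemma topspace_weak_star_topology [simp]: "topspace weak_star_topology = UNIV"
  unfolding weak_star_topology_def topology_generated_by_topspace
  by (auto intro!: exI[of _ UNIV])

lemma closedin_weak_star_topology_box:
  assumes "closedin weak_star_topology S" "y \<notin> S"
  shows "\<exists>xs d. d > 0 \<and> weak_star_box y xs d \<inter> S = {}"
proof -
  have "openin weak_star_topology (- S)"
    using assms(1) by (simp add: closedin_def Compl_eq_Diff_UNIV)
  then obtain xs d where "d > 0" "weak_star_box y xs d \<subseteq> - S"
    using openin_weak_star_topology_box assms(2) by blast
  then show ?thesis by blast
qed

lemma center_in_weak_star_box: "d > 0 \<Longrightarrow> y \<in> weak_star_box y xs d"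
  by (simp add: weak_star_box_def)

lemma convex_weak_star_box: "convex (weak_star_box y xs d)"
proof -
  have "weak_star_box y xs d =
      (\<Inter>x\<in>set xs. (\<lambda>y'. blinfun_apply y' x) -` ball (blinfun_apply y x) d)"
    by (auto simp: weak_star_box_def dist_real_def abs_minus_commute)
  then show ?thesis
    by (auto intro!: convex_INT convex_linear_vimage
        bounded_linear.linear[OF blinfun.bounded_linear_left])
qed

definition sublinear :: "('v::real_vector \<Rightarrow> real) \<Rightarrow> bool" where
  "sublinear p \<longleftrightarrow> (\<forall>a b. p (a + b) \<le> p a + p b) \<and> (\<forall>t a. t > 0 \<longrightarrow> p (t *\<^sub>R a) \<le> t * p a)"

lemma sublinear_scaleR:
  assumes "sublinear p" "t > 0"
  shows "p (t *\<^sub>R a) = t * p a"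
proof -
  have le: "p (s *\<^sub>R b) \<le> s * p b" if "s > 0" for s b
    using assms(1) that unfolding sublinear_def by blast
  have "p a = p (inverse t *\<^sub>R (t *\<^sub>R a))"
    using assms(2) by simp
  also have "\<dots> \<le> inverse t * p (t *\<^sub>R a)"
    using le[of "inverse t" "t *\<^sub>R a"] assms(2) by simp
  finally have "t * p a \<le> p (t *\<^sub>R a)"
    using assms(2) by (simp add: field_simps)
  with le[OF assms(2), of a] show ?thesis by linarith
qed

lemma sublinear_add: "sublinear p \<Longrightarrow> p (a + b) \<le> p a + p b"
  unfolding sublinear_def by blast

text \<open>A linear functional defined on a subspace is represented by its graph \<open>G \<subseteq> V \<times> \<real>\<close>;
  this makes the Zorn argument a statement about sets.\<close>

definition dominated_linear_graph :: "('v::real_vector \<Rightarrow> real) \<Rightarrow> ('v \<times> real) set \<Rightarrow> bool" where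
  "dominated_linear_graph p G \<longleftrightarrow> subspace G
     \<and> (\<forall>x a b. (x, a) \<in> G \<longrightarrow> (x, b) \<in> G \<longrightarrow> a = b) \<and> (\<forall>x a. (x, a) \<in> G \<longrightarrow> a \<le> p x)"

lemma dominated_linear_graphD:
  assumes "dominated_linear_graph p G"
  shows "subspace G" "\<And>x a b. (x, a) \<in> G \<Longrightarrow> (x, b) \<in> G \<Longrightarrow> a = b"
    "\<And>x a. (x, a) \<in> G \<Longrightarrow> a \<le> p x"
  using assms unfolding dominated_linear_graph_def by blast+

lemma dominated_linear_graphI:
  assumes "subspace G" and "\<And>x a b. (x, a) \<in> G \<Longrightarrow> (x, b) \<in> G \<Longrightarrow> a = b"
    and "\<And>x a. (x, a) \<in> G \<Longrightarrow> a \<le> p x"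
  shows "dominated_linear_graph p G"
  unfolding dominated_linear_graph_def
proof (intro conjI allI impI)
  show "subspace G" by fact
  show "a = b" if "(x, a) \<in> G" "(x, b) \<in> G" for x a b
    using that by (rule assms(2))
  show "a \<le> p x" if "(x, a) \<in> G" for x a
    using that by (rule assms(3))
qed

lemma dominated_linear_graph_extension_constant:
  assumes p: "sublinear p" and G: "dominated_linear_graph p G"
  obtains c where "\<And>x a. (x, a) \<in> G \<Longrightarrow> a - p (x - w) \<le> c"
    and "\<And>y b. (y, b) \<in> G \<Longrightarrow> c \<le> p (y + w) - b"
proof -
  have key: "a - p (x - w) \<le> p (y + w) - b" if "(x, a) \<in> G" "(y, b) \<in> G" for x a y b
  proof -
    have "(x + y, a + b) \<in> G"
      using subspace_add[OF dominated_linear_graphD(1)[OF G] that] by simp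
    then have "a + b \<le> p (x + y)"
      by (rule dominated_linear_graphD(3)[OF G])
    also have "\<dots> = p ((x - w) + (y + w))"
      by (simp add: algebra_simps)
    also have "\<dots> \<le> p (x - w) + p (y + w)"
      by (rule sublinear_add[OF p])
    finally show ?thesis by simp
  qed
  define S where "S = {a - p (x - w) | x a. (x, a) \<in> G}"
  have "(0, 0) \<in> G"
    using subspace_0[OF dominated_linear_graphD(1)[OF G]] by (simp add: zero_prod_def)
  then have "S \<noteq> {}"
    unfolding S_def by blast
  have upper: "z \<le> p (y + w) - b" if "z \<in> S" "(y, b) \<in> G" for z y b
    using that key unfolding S_def by blast
  show thesis
  proof (rule that[of "Sup S"])
    have "bdd_above S"
      using upper[OF _ \<open>(0, 0) \<in> G\<close>] by (rule bdd_aboveI)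
    moreover have "a - p (x - w) \<in> S" if "(x, a) \<in> G" for x a
      unfolding S_def using that by blast
    ultimately show "a - p (x - w) \<le> Sup S" if "(x, a) \<in> G" for x a
      using that by (blast intro: cSup_upper)
    show "Sup S \<le> p (y + w) - b" if "(y, b) \<in> G" for y b
      using \<open>S \<noteq> {}\<close> upper[OF _ that] by (rule cSup_least)
  qed
qed

lemma dominated_linear_graph_extension_dominated:
  assumes p: "sublinear p" and G: "dominated_linear_graph p G" and xa: "(x, a) \<in> G"
    and c1: "\<And>x a. (x, a) \<in> G \<Longrightarrow> a - p (x - w) \<le> c"
    and c2: "\<And>y b. (y, b) \<in> G \<Longrightarrow> c \<le> p (y + w) - b"
  shows "a + t * c \<le> p (x + t *\<^sub>R w)"
proof -
  have scaled: "(s *\<^sub>R x, s * a) \<in> G" for s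
    using subspace_scale[OF dominated_linear_graphD(1)[OF G] xa, of s] by simp
  consider "t = 0" | "t > 0" | "t < 0" by linarith
  then show ?thesis
  proof cases
    case 1
    then show ?thesis using dominated_linear_graphD(3)[OF G xa] by simp
  next
    case 2
    have "c \<le> p (inverse t *\<^sub>R x + w) - inverse t * a"
      using c2[OF scaled] .
    then have "t * c \<le> t * p (inverse t *\<^sub>R x + w) - a"
      using 2 by (simp add: field_simps)
    also have "t * p (inverse t *\<^sub>R x + w) = p (t *\<^sub>R (inverse t *\<^sub>R x + w))"
      using sublinear_scaleR[OF p 2] by simp
    also have "t *\<^sub>R (inverse t *\<^sub>R x + w) = x + t *\<^sub>R w"
      using 2 by (simp add: algebra_simps)
    finally show ?thesis by simp
  next
    case 3
    define s where "s = - t"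
    have s: "s > 0" using 3 s_def by simp
    have "inverse s * a - p (inverse s *\<^sub>R x - w) \<le> c"
      using c1[OF scaled] .
    then have "a - s * p (inverse s *\<^sub>R x - w) \<le> s * c"
      using s by (simp add: field_simps)
    also have "s * p (inverse s *\<^sub>R x - w) = p (s *\<^sub>R (inverse s *\<^sub>R x - w))"
      using sublinear_scaleR[OF p s] by simp
    also have "s *\<^sub>R (inverse s *\<^sub>R x - w) = x + t *\<^sub>R w"
      using s s_def by (simp add: algebra_simps)
    finally show ?thesis using s_def by simp
  qed
qed

lemma dominated_linear_graph_extend:
  assumes p: "sublinear p" and G: "dominated_linear_graph p G" and w: "\<And>b. (w, b) \<notin> G"
  shows "\<exists>G'. dominated_linear_graph p G' \<and> G \<subset> G'"
proof -
  obtain c where c1: "\<And>x a. (x, a) \<in> G \<Longrightarrow> a - p (x - w) \<le> c"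
    and c2: "\<And>y b. (y, b) \<in> G \<Longrightarrow> c \<le> p (y + w) - b"
    by (rule dominated_linear_graph_extension_constant[OF p G]) (rule that)
  have S: "subspace G" using dominated_linear_graphD(1)[OF G] .
  define G' where "G' = {(x + t *\<^sub>R w, a + t * c) | x a t. (x, a) \<in> G}"
  have "(0, 0) \<in> G"
    using subspace_0[OF S] by (simp add: zero_prod_def)
  have "subspace G'"
    unfolding subspace_def
  proof (intro conjI ballI allI)
    have "(0 + 0 *\<^sub>R w, 0 + 0 * c) \<in> G'"
      unfolding G'_def using \<open>(0, 0) \<in> G\<close> by blast
    then show "0 \<in> G'" by (simp add: zero_prod_def)
  next
    fix u v assume "u \<in> G'" "v \<in> G'"
    then obtain x1 a1 t1 x2 a2 t2 where g: "(x1, a1) \<in> G" "(x2, a2) \<in> G"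
      and "u = (x1 + t1 *\<^sub>R w, a1 + t1 * c)" "v = (x2 + t2 *\<^sub>R w, a2 + t2 * c)"
      unfolding G'_def by blast
    then have "u + v = ((x1 + x2) + (t1 + t2) *\<^sub>R w, (a1 + a2) + (t1 + t2) * c)"
      by (simp add: algebra_simps)
    moreover have "(x1 + x2, a1 + a2) \<in> G"
      using subspace_add[OF S g] by simp
    ultimately show "u + v \<in> G'"
      unfolding G'_def by blast
  next
    fix r u assume "u \<in> G'"
    then obtain x1 a1 t1 where g: "(x1, a1) \<in> G" and "u = (x1 + t1 *\<^sub>R w, a1 + t1 * c)"
      unfolding G'_def by blast
    then have "r *\<^sub>R u = (r *\<^sub>R x1 + (r * t1) *\<^sub>R w, r * a1 + (r * t1) * c)"
      by (simp add: algebra_simps)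
    moreover have "(r *\<^sub>R x1, r * a1) \<in> G"
      using subspace_scale[OF S g] by simp
    ultimately show "r *\<^sub>R u \<in> G'"
      unfolding G'_def by blast
  qed
  moreover have "a = b" if mem: "(x, a) \<in> G'" "(x, b) \<in> G'" for x a b
  proof -
    obtain x1 a1 t1 x2 a2 t2 where g: "(x1, a1) \<in> G" "(x2, a2) \<in> G"
      and e: "x = x1 + t1 *\<^sub>R w" "a = a1 + t1 * c" "x = x2 + t2 *\<^sub>R w" "b = a2 + t2 * c"
      using mem unfolding G'_def by blast
    have diff: "(x1 - x2, a1 - a2) \<in> G"
      using subspace_diff[OF S g] by simp
    have "t1 = t2"
    proof (rule ccontr)
      assume "t1 \<noteq> t2"
      have "x1 - x2 = (t2 - t1) *\<^sub>R w"
        using e by (simp add: algebra_simps)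
      then have "w = inverse (t2 - t1) *\<^sub>R (x1 - x2)"
        using \<open>t1 \<noteq> t2\<close> by simp
      then show False
        using subspace_scale[OF S diff, of "inverse (t2 - t1)"] w by simp
    qed
    then have "x1 = x2"
      using e by simp
    then have "a1 = a2"
      using dominated_linear_graphD(2)[OF G g(1), of a2] g(2) by simp
    then show "a = b"
      using e \<open>t1 = t2\<close> by simp
  qed
  moreover have "a \<le> p x" if mem: "(x, a) \<in> G'" for x a
  proof -
    obtain x1 a1 t where "(x1, a1) \<in> G" "(x, a) = (x1 + t *\<^sub>R w, a1 + t * c)"
      using mem unfolding G'_def by blast
    then show ?thesis
      using dominated_linear_graph_extension_dominated[OF p G _ c1 c2] by auto
  qed
  ultimately have "dominated_linear_graph p G'"
    by (rule dominated_linear_graphI)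
  moreover have "G \<subseteq> G'"
  proof
    fix u assume "u \<in> G"
    moreover obtain x a where "u = (x, a)" by force
    moreover have "(x, a) = (x + 0 *\<^sub>R w, a + 0 * c)" by simp
    ultimately show "u \<in> G'" unfolding G'_def by blast
  qed
  moreover have "(w, c) \<in> G'"
  proof -
    have "(0 + 1 *\<^sub>R w, 0 + 1 * c) \<in> G'"
      unfolding G'_def using \<open>(0, 0) \<in> G\<close> by blast
    then show ?thesis by simp
  qed
  ultimately show ?thesis using w by blast
qed

lemma dominated_linear_graph_Union_chain:
  assumes "C \<noteq> {}" and chain: "\<And>X Y. X \<in> C \<Longrightarrow> Y \<in> C \<Longrightarrow> X \<subseteq> Y \<or> Y \<subseteq> X"
    and dom: "\<And>X. X \<in> C \<Longrightarrow> dominated_linear_graph p X"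
  shows "dominated_linear_graph p (\<Union>C)"
proof -
  have common: "\<exists>Z\<in>C. u \<in> Z \<and> v \<in> Z" if "u \<in> \<Union>C" "v \<in> \<Union>C" for u v
    using that chain by blast
  have "subspace (\<Union>C)"
    unfolding subspace_def
  proof (intro conjI ballI allI)
    show "0 \<in> \<Union>C"
      using \<open>C \<noteq> {}\<close> dom dominated_linear_graphD(1) subspace_0 by blast
    show "u + v \<in> \<Union>C" if "u \<in> \<Union>C" "v \<in> \<Union>C" for u v
      using common[OF that] dom dominated_linear_graphD(1) subspace_add by blast
    show "r *\<^sub>R u \<in> \<Union>C" if "u \<in> \<Union>C" for r u
      using that dom dominated_linear_graphD(1) subspace_scale by blast
  qed
  moreover have "a = b" if mem: "(x, a) \<in> \<Union>C" "(x, b) \<in> \<Union>C" for x a b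
  proof -
    obtain Z where "Z \<in> C" "(x, a) \<in> Z" "(x, b) \<in> Z"
      using common[OF mem] by blast
    from \<open>(x, a) \<in> Z\<close> \<open>(x, b) \<in> Z\<close> show "a = b"
      by (rule dominated_linear_graphD(2)[OF dom[OF \<open>Z \<in> C\<close>]])
  qed
  moreover have "a \<le> p x" if "(x, a) \<in> \<Union>C" for x a
    using that dom dominated_linear_graphD(3) by blast
  ultimately show ?thesis
    by (rule dominated_linear_graphI)
qed

lemma maximal_dominated_linear_graph:
  assumes G0: "dominated_linear_graph p G0"
  obtains M where "dominated_linear_graph p M" and "G0 \<subseteq> M"
    and "\<And>X. dominated_linear_graph p X \<Longrightarrow> M \<subseteq> X \<Longrightarrow> X = M"
proof -
  define A where "A = {G. dominated_linear_graph p G \<and> G0 \<subseteq> G}"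
  have "\<exists>M\<in>A. \<forall>X\<in>A. M \<subseteq> X \<longrightarrow> X = M"
  proof (rule subset_Zorn)
    fix C assume "subset.chain A C"
    then have "C \<subseteq> A" and chain: "\<And>X Y. X \<in> C \<Longrightarrow> Y \<in> C \<Longrightarrow> X \<subseteq> Y \<or> Y \<subseteq> X"
      by (auto simp: subset_chain_def)
    show "\<exists>U\<in>A. \<forall>X\<in>C. X \<subseteq> U"
    proof (cases "C = {}")
      case True
      have "G0 \<in> A"
        unfolding A_def using G0 by simp
      with True show ?thesis by blast
    next
      case False
      then have "\<Union>C \<in> A"
        using dominated_linear_graph_Union_chain[OF False chain] \<open>C \<subseteq> A\<close>
        unfolding A_def by blast
      then show ?thesis by blast
    qed
  qed
  then obtain M where "M \<in> A" and max: "\<And>X. X \<in> A \<Longrightarrow> M \<subseteq> X \<Longrightarrow> X = M"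
    by blast
  then have M: "dominated_linear_graph p M" "G0 \<subseteq> M"
    unfolding A_def by simp_all
  show thesis
  proof (rule that[OF M])
    fix X assume X: "dominated_linear_graph p X" "M \<subseteq> X"
    show "X = M"
    proof (rule max)
      show "X \<in> A"
        unfolding A_def using X M(2) by auto
      show "M \<subseteq> X" by (fact X(2))
    qed
  qed
qed

lemma linear_functional_of_total_dominated_graph:
  assumes M: "dominated_linear_graph p M" and total: "\<And>w. \<exists>b. (w, b) \<in> M"
  obtains F where "linear F" and "\<And>x. F x \<le> p x" and "\<And>x a. (x, a) \<in> M \<Longrightarrow> F x = a"
proof -
  define F where "F w = (THE b. (w, b) \<in> M)" for w
  have unique: "\<exists>!b. (w, b) \<in> M" for w
  proof -
    obtain b where b: "(w, b) \<in> M"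
      using total by blast
    moreover have "c = b" if "(w, c) \<in> M" for c
      using dominated_linear_graphD(2)[OF M that b] .
    ultimately show ?thesis by (rule ex1I)
  qed
  have Fw: "(w, F w) \<in> M" for w
    unfolding F_def using unique by (rule theI')
  have FM: "(w, b) \<in> M \<longleftrightarrow> F w = b" for w b
  proof
    assume "(w, b) \<in> M"
    then show "F w = b" by (rule dominated_linear_graphD(2)[OF M Fw])
  next
    assume "F w = b"
    then show "(w, b) \<in> M" using Fw[of w] by simp
  qed
  have "linear F"
  proof (rule linearI)
    fix a b :: 'a and r :: real
    show "F (a + b) = F a + F b"
      using subspace_add[OF dominated_linear_graphD(1)[OF M], of "(a, F a)" "(b, F b)"] FM by simp
    show "F (r *\<^sub>R a) = r *\<^sub>R F a"
      using subspace_scale[OF dominated_linear_graphD(1)[OF M], of "(a, F a)" r] FM by simp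
  qed
  moreover have "F x \<le> p x" for x
    using dominated_linear_graphD(3)[OF M, of x "F x"] FM by simp
  moreover have "F x = a" if "(x, a) \<in> M" for x a
    using that FM by simp
  ultimately show thesis by (rule that)
qed

theorem hahn_banach_sublinear:
  assumes p: "sublinear p" and G0: "dominated_linear_graph p G0"
  shows "\<exists>F. linear F \<and> (\<forall>x. F x \<le> p x) \<and> (\<forall>(x, a)\<in>G0. F x = a)"
proof -
  obtain M where M: "dominated_linear_graph p M" "G0 \<subseteq> M"
    and max: "\<And>X. dominated_linear_graph p X \<Longrightarrow> M \<subseteq> X \<Longrightarrow> X = M"
    by (rule maximal_dominated_linear_graph[OF G0]) (rule that)
  have total: "\<exists>b. (w, b) \<in> M" for w
  proof (rule ccontr)
    assume "\<nexists>b. (w, b) \<in> M"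
    then obtain G' where G': "dominated_linear_graph p G'" "M \<subset> G'"
      using dominated_linear_graph_extend[OF p M(1)] by blast
    have "G' = M"
      by (rule max) (use G' in auto)
    with G'(2) show False by simp
  qed
  obtain F where "linear F" "\<And>x. F x \<le> p x" and graph: "\<And>x a. (x, a) \<in> M \<Longrightarrow> F x = a"
    by (rule linear_functional_of_total_dominated_graph[OF M(1) total]) (rule that)
  then show ?thesis
    using M(2) by blast
qed

lemma sublinear_0: "sublinear p \<Longrightarrow> p 0 = 0"
  using sublinear_scaleR[of p 2 0] by simp

lemma exists_linear_dominated_normalized:
  assumes p: "sublinear p" and pu: "1 \<le> p u" and pmu: "- 1 \<le> p (- u)"
  shows "\<exists>F. linear F \<and> F u = 1 \<and> (\<forall>x. F x \<le> p x)"
proof -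
  define G0 where "G0 = range (\<lambda>t. (t *\<^sub>R u, t))"
  have "u \<noteq> 0" using pu sublinear_0[OF p] by auto
  have "linear (\<lambda>t. (t *\<^sub>R u, t))"
    by (rule linearI) (auto simp: algebra_simps)
  then have "subspace G0"
    unfolding G0_def using linear_subspace_image subspace_UNIV by blast
  moreover have "a = b" if "(x, a) \<in> G0" "(x, b) \<in> G0" for x a b
    using that \<open>u \<noteq> 0\<close> unfolding G0_def by auto
  moreover have "t \<le> p (t *\<^sub>R u)" for t
  proof -
    consider "t = 0" | "t > 0" | "t < 0" by linarith
    then show ?thesis
    proof cases
      case 1
      then show ?thesis using sublinear_0[OF p] by simp
    next
      case 2
      then show ?thesis
        using sublinear_scaleR[OF p 2, of u] pu mult_left_mono[OF pu, of t] by simp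
    next
      case 3
      have "p (t *\<^sub>R u) = (- t) * p (- u)"
        using sublinear_scaleR[OF p, of "- t" "- u"] 3 by simp
      then show ?thesis
        using mult_left_mono[OF pmu, of "- t"] 3 by simp
    qed
  qed
  then have "a \<le> p x" if "(x, a) \<in> G0" for x a
    using that unfolding G0_def by auto
  ultimately have "dominated_linear_graph p G0"
    by (rule dominated_linear_graphI)
  then obtain F where "linear F" "\<And>x. F x \<le> p x" and graph: "\<forall>(x, a)\<in>G0. F x = a"
    using hahn_banach_sublinear[OF p] by blast
  moreover have "(u, 1) \<in> G0"
    unfolding G0_def by (auto intro: range_eqI[of _ _ 1])
  then have "F u = 1"
    using graph by auto
  ultimately show ?thesis by blast
qed

definition minkowski_functional :: "'v::real_vector set \<Rightarrow> 'v \<Rightarrow> real" where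
  "minkowski_functional C a = Inf {t. t > 0 \<and> inverse t *\<^sub>R a \<in> C}"

context
  fixes C :: "'v::real_vector set" and q :: "'v \<Rightarrow> real"
  assumes convex_C: "convex C" and zero_in_C: "0 \<in> C"
    and q_nonneg: "\<And>a. q a \<ge> 0" and q_scaleR: "\<And>t a. t > 0 \<Longrightarrow> q (t *\<^sub>R a) = t * q a"
    and q_ball: "\<And>a. q a < 1 \<Longrightarrow> a \<in> C"
begin

lemma minkowski_scale_mem:
  assumes "q a < t"
  shows "t > 0" and "inverse t *\<^sub>R a \<in> C"
proof -
  show t: "t > 0"
    using q_nonneg[of a] assms by linarith
  have "q (inverse t *\<^sub>R a) = inverse t * q a"
    using q_scaleR[of "inverse t" a] t by simp
  also have "\<dots> < 1"
    using t assms by (simp add: field_simps)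
  finally show "inverse t *\<^sub>R a \<in> C"
    by (rule q_ball)
qed

lemma minkowski_scale_mono:
  assumes "s > 0" "inverse s *\<^sub>R a \<in> C" "s \<le> t"
  shows "inverse t *\<^sub>R a \<in> C"
proof -
  have "t > 0" using assms by linarith
  have "(s / t) *\<^sub>R (inverse s *\<^sub>R a) + (1 - s / t) *\<^sub>R 0 \<in> C"
    by (rule convexD[OF convex_C assms(2) zero_in_C]) (use assms \<open>t > 0\<close> in auto)
  moreover have "(s / t) *\<^sub>R (inverse s *\<^sub>R a) + (1 - s / t) *\<^sub>R 0 = inverse t *\<^sub>R a"
    using assms(1) by (simp add: field_simps)
  ultimately show ?thesis by metis
qed

lemma minkowski_functional_le:
  assumes "t > 0" "inverse t *\<^sub>R a \<in> C"
  shows "minkowski_functional C a \<le> t"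
proof -
  have "bdd_below {t. t > 0 \<and> inverse t *\<^sub>R a \<in> C}"
    unfolding bdd_below_def by (auto intro!: exI[of _ 0])
  then show ?thesis
    unfolding minkowski_functional_def by (rule cInf_lower[rotated]) (use assms in simp)
qed

lemma minkowski_scales_nonempty: "{t. t > 0 \<and> inverse t *\<^sub>R a \<in> C} \<noteq> {}"
  using minkowski_scale_mem[of a "q a + 1"] by auto

lemma minkowski_functional_nonneg: "0 \<le> minkowski_functional C a"
  unfolding minkowski_functional_def
  by (rule cInf_greatest[OF minkowski_scales_nonempty]) simp

lemma minkowski_functional_lessD:
  assumes "minkowski_functional C a < t"
  shows "t > 0" and "inverse t *\<^sub>R a \<in> C"
proof -
  obtain s where "s > 0" "inverse s *\<^sub>R a \<in> C" "s < t"
    using cInf_lessD[OF minkowski_scales_nonempty assms[unfolded minkowski_functional_def]] by blast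
  then show "t > 0" and "inverse t *\<^sub>R a \<in> C"
    using minkowski_scale_mono[of s a t] by simp_all
qed

lemma minkowski_functional_le_q: "minkowski_functional C a \<le> q a"
proof (rule field_le_epsilon)
  fix e :: real assume "e > 0"
  then have "q a < q a + e" by simp
  then show "minkowski_functional C a \<le> q a + e"
    using minkowski_functional_le[OF minkowski_scale_mem] by blast
qed

lemma sublinear_minkowski_functional: "sublinear (minkowski_functional C)"
  unfolding sublinear_def
proof (intro conjI allI impI)
  fix a b
  show "minkowski_functional C (a + b) \<le> minkowski_functional C a + minkowski_functional C b"
  proof (rule field_le_epsilon)
    fix e :: real assume "e > 0"
    define s where "s = minkowski_functional C a + e / 2"
    define t where "t = minkowski_functional C b + e / 2"
    have "minkowski_functional C a < s" "minkowski_functional C b < t"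
      using \<open>e > 0\<close> unfolding s_def t_def by simp_all
    note s = minkowski_functional_lessD[OF this(1)] and t = minkowski_functional_lessD[OF this(2)]
    have "(s / (s + t)) *\<^sub>R (inverse s *\<^sub>R a) + (1 - s / (s + t)) *\<^sub>R (inverse t *\<^sub>R b) \<in> C"
      by (rule convexD[OF convex_C s(2) t(2)]) (use s t in auto)
    moreover have "(s / (s + t)) *\<^sub>R (inverse s *\<^sub>R a) + (1 - s / (s + t)) *\<^sub>R (inverse t *\<^sub>R b)
        = inverse (s + t) *\<^sub>R (a + b)"
      using s t by (simp add: field_simps scaleR_add_right)
    ultimately have "inverse (s + t) *\<^sub>R (a + b) \<in> C"
      by metis
    then have "minkowski_functional C (a + b) \<le> s + t"
      by (rule minkowski_functional_le[rotated]) (use s(1) t(1) in simp)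
    then show "minkowski_functional C (a + b) \<le> minkowski_functional C a + minkowski_functional C b + e"
      unfolding s_def t_def by simp
  qed
next
  fix c :: real and a assume "c > 0"
  show "minkowski_functional C (c *\<^sub>R a) \<le> c * minkowski_functional C a"
  proof (rule field_le_epsilon)
    fix e :: real assume "e > 0"
    define s where "s = minkowski_functional C a + e / c"
    have "minkowski_functional C a < s"
      using \<open>e > 0\<close> \<open>c > 0\<close> unfolding s_def by simp
    note s = minkowski_functional_lessD[OF this]
    have "inverse (c * s) * c = inverse s"
      using \<open>c > 0\<close> s(1) by (simp add: field_simps)
    then have "inverse (c * s) *\<^sub>R (c *\<^sub>R a) \<in> C"
      by (subst scaleR_scaleR) (simp only: s(2))
    then have "minkowski_functional C (c *\<^sub>R a) \<le> c * s"
      by (rule minkowski_functional_le[rotated]) (use s(1) \<open>c > 0\<close> in simp)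
    also have "\<dots> = c * minkowski_functional C a + e"
      using \<open>c > 0\<close> unfolding s_def by (simp add: field_simps)
    finally show "minkowski_functional C (c *\<^sub>R a) \<le> c * minkowski_functional C a + e" .
  qed
qed

end

lemma separation_point_absorbing_convex:
  fixes C :: "'v::real_vector set" and q :: "'v \<Rightarrow> real"
  assumes C: "convex C" "0 \<in> C" and u: "u \<notin> C"
    and q_nonneg: "\<And>p. q p \<ge> 0" and q_scaleR: "\<And>t p. t > 0 \<Longrightarrow> q (t *\<^sub>R p) = t * q p"
    and q_ball: "\<And>p. q p < 1 \<Longrightarrow> p \<in> C"
  obtains F where "linear F" and "F u = 1" and "\<And>c. c \<in> C \<Longrightarrow> F c \<le> 1" and "\<And>p. F p \<le> q p"
proof -
  note gauge_le_q = minkowski_functional_le_q[OF C q_nonneg q_scaleR q_ball]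
    and gauge_sublinear = sublinear_minkowski_functional[OF C q_nonneg q_scaleR q_ball]
    and gauge_nonneg = minkowski_functional_nonneg[OF C q_nonneg q_scaleR q_ball]
    and gauge_lessD = minkowski_functional_lessD(2)[OF C q_nonneg q_scaleR q_ball]
    and gauge_le = minkowski_functional_le[OF C q_nonneg q_scaleR q_ball]
  have "\<not> minkowski_functional C u < 1"
    using gauge_lessD[of u 1] u by auto
  then have "1 \<le> minkowski_functional C u" by simp
  moreover have "- 1 \<le> minkowski_functional C (- u)"
    using gauge_nonneg[of "- u"] by simp
  ultimately obtain F where F: "linear F" "F u = 1" and Fp: "\<And>x. F x \<le> minkowski_functional C x"
    using exists_linear_dominated_normalized[OF gauge_sublinear] by blast
  show thesis
  proof (rule that[OF F])
    show "F c \<le> 1" if "c \<in> C" for c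
      using Fp[of c] gauge_le[of 1 c] that by simp
    show "F p \<le> q p" for p
      using Fp[of p] gauge_le_q[of p] by simp
  qed
qed

theorem separation_convex_sets:
  fixes A B :: "'v::real_vector set" and q :: "'v \<Rightarrow> real"
  assumes A: "convex A" and B: "convex B" and disj: "A \<inter> B = {}" and a0: "a0 \<in> A" and b0: "b0 \<in> B"
    and q_nonneg: "\<And>p. q p \<ge> 0" and q_scaleR: "\<And>t p. t > 0 \<Longrightarrow> q (t *\<^sub>R p) = t * q p"
    and q_ball: "\<And>p. q p < 1 \<Longrightarrow> \<exists>a\<in>A. \<exists>b\<in>B. p + (a0 - b0) = a - b"
  obtains F where "linear F" and "F (b0 - a0) = 1"
    and "\<And>a b. a \<in> A \<Longrightarrow> b \<in> B \<Longrightarrow> F a \<le> F b" and "\<And>p. F p \<le> q p"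
proof -
  define C where "C = (\<lambda>x. x - (a0 - b0)) ` (\<Union>a\<in>A. \<Union>b\<in>B. {a - b})"
  have mem: "p \<in> C \<longleftrightarrow> (\<exists>a\<in>A. \<exists>b\<in>B. p + (a0 - b0) = a - b)" for p
  proof
    assume "p \<in> C"
    then obtain a b where "a \<in> A" "b \<in> B" "p = a - b - (a0 - b0)"
      unfolding C_def by blast
    then show "\<exists>a\<in>A. \<exists>b\<in>B. p + (a0 - b0) = a - b" by auto
  next
    assume "\<exists>a\<in>A. \<exists>b\<in>B. p + (a0 - b0) = a - b"
    then obtain a b where ab: "a \<in> A" "b \<in> B" and "p + (a0 - b0) = a - b" by blast
    then have "p = a - b - (a0 - b0)" by (metis add_diff_cancel_right')
    moreover have "a - b - (a0 - b0) \<in> C"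
      unfolding C_def by (rule imageI) (use ab in blast)
    ultimately show "p \<in> C" by simp
  qed
  have "convex C"
    unfolding C_def by (intro convex_translation_subtract convex_differences A B)
  moreover have "0 + (a0 - b0) = a0 - b0" by simp
  with a0 b0 have "0 \<in> C"
    unfolding mem by blast
  moreover have "b0 - a0 \<notin> C"
  proof
    assume "b0 - a0 \<in> C"
    then obtain a b where "a \<in> A" "b \<in> B" "b0 - a0 + (a0 - b0) = a - b"
      unfolding mem by blast
    moreover from this(3) have "a = b" by (simp add: algebra_simps)
    ultimately show False using disj by auto
  qed
  moreover have "q p < 1 \<Longrightarrow> p \<in> C" for p
    using q_ball mem by blast
  ultimately obtain F where F: "linear F" "F (b0 - a0) = 1"
    and FC: "\<And>c. c \<in> C \<Longrightarrow> F c \<le> 1" and Fq: "\<And>p. F p \<le> q p"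
    using separation_point_absorbing_convex[where q = q, OF _ _ _ q_nonneg q_scaleR] by blast
  have "F a \<le> F b" if "a \<in> A" "b \<in> B" for a b
  proof -
    have "a - b - (a0 - b0) + (a0 - b0) = a - b" by simp
    with that have "F (a - b - (a0 - b0)) \<le> 1"
      using FC unfolding mem by blast
    moreover have "F (a - b - (a0 - b0)) = F a - F b - F (a0 - b0)"
      by (simp only: linear_diff[OF F(1)])
    moreover have "F (a0 - b0) = - F (b0 - a0)"
      using linear_neg[OF F(1), of "b0 - a0"] by simp
    ultimately show ?thesis using F(2) by simp
  qed
  then show thesis
    using that[OF F] Fq by blast
qed

lemma linear_prod_real_split:
  fixes F :: "'v::real_vector \<times> real \<Rightarrow> real"
  assumes "linear F"
  shows "F (v, s) = F (v, 0) + s * F (0, 1)" and "linear (\<lambda>v. F (v, 0))"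
proof -
  have "F (v, s) = F ((v, 0) + s *\<^sub>R (0, 1))" by simp
  also have "\<dots> = F (v, 0) + s * F (0, 1)"
    by (simp only: linear_add[OF assms] linear_scale[OF assms] real_scaleR_def)
  finally show "F (v, s) = F (v, 0) + s * F (0, 1)" .
  show "linear (\<lambda>v. F (v, 0))"
    using linear_add[OF assms, of "(_, 0)" "(_, 0)"] linear_scale[OF assms, of _ "(_, 0)"]
    by (intro linearI) auto
qed

lemma evaluation_if_vanishes_on_kernels:
  fixes F :: "('a::real_normed_vector \<Rightarrow>\<^sub>L real) \<Rightarrow> real"
  assumes "linear F" and "\<And>v. (\<forall>x\<in>set xs. blinfun_apply v x = 0) \<Longrightarrow> F v = 0"
  shows "\<exists>z. \<forall>v. F v = blinfun_apply v z"
  using assms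
proof (induction xs arbitrary: F)
  case Nil
  then show ?case by (auto intro!: exI[of _ 0])
next
  case (Cons x xs)
  show ?case
  proof (cases "\<forall>v::'a \<Rightarrow>\<^sub>L real. (\<forall>x'\<in>set xs. blinfun_apply v x' = 0) \<longrightarrow> blinfun_apply v x = 0")
    case True
    have "F v = 0" if "\<forall>x'\<in>set xs. blinfun_apply v x' = 0" for v
      using Cons.prems(2)[of v] True that by simp
    then show ?thesis
      using Cons.IH[OF Cons.prems(1)] by blast
  next
    case False
    then obtain v0 :: "'a \<Rightarrow>\<^sub>L real" where v0: "\<forall>x'\<in>set xs. blinfun_apply v0 x' = 0"
      "blinfun_apply v0 x \<noteq> 0" by blast
    define y0 where "y0 = inverse (blinfun_apply v0 x) *\<^sub>R v0"
    have y0: "blinfun_apply y0 x = 1" "\<forall>x'\<in>set xs. blinfun_apply y0 x' = 0"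
      using v0 unfolding y0_def by (auto simp: blinfun.scaleR_left)
    \<comment> \<open>Subtracting a multiple of evaluation at \<open>x\<close> reduces to the kernels of \<open>xs\<close>.\<close>
    define F' where "F' v = F v - F y0 * blinfun_apply v x" for v
    have "linear F'"
      unfolding F'_def
      by (intro linearI) (simp_all add: linear_add[OF Cons.prems(1)] linear_scale[OF Cons.prems(1)]
          blinfun.add_left blinfun.scaleR_left algebra_simps)
    moreover have "F' v = 0" if v: "\<forall>x'\<in>set xs. blinfun_apply v x' = 0" for v
    proof -
      define w where "w = v - blinfun_apply v x *\<^sub>R y0"
      have "\<forall>x'\<in>set (x # xs). blinfun_apply w x' = 0"
        using v y0 unfolding w_def by (auto simp: blinfun.diff_left blinfun.scaleR_left)
      then have "F w = 0" using Cons.prems(2) by blast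
      then show "F' v = 0"
        unfolding w_def F'_def by (simp add: linear_diff[OF Cons.prems(1)] linear_scale[OF Cons.prems(1)])
    qed
    ultimately obtain z' where z': "\<And>v. F' v = blinfun_apply v z'"
      using Cons.IH by blast
    have "F v = blinfun_apply v (z' + F y0 *\<^sub>R x)" for v
      using z'[of v] unfolding F'_def by (simp add: blinfun.add_right blinfun.scaleR_right)
    then show ?thesis by blast
  qed
qed

lemma convex_efun_le:
  assumes "convex_efun g" "g a \<le> ereal s" "g b \<le> ereal t" "0 \<le> u" "u \<le> 1"
  shows "g (u *\<^sub>R a + (1 - u) *\<^sub>R b) \<le> ereal (u * s + (1 - u) * t)"
proof -
  have "g (u *\<^sub>R a + (1 - u) *\<^sub>R b) \<le> ereal u * g a + ereal (1 - u) * g b"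
    using assms(1,4,5) unfolding convex_efun_def by blast
  also have "\<dots> \<le> ereal u * ereal s + ereal (1 - u) * ereal t"
    using assms(2-5) by (intro add_mono ereal_mult_left_mono) auto
  finally show ?thesis by simp
qed

lemma convex_efun_epigraph:
  assumes "convex_efun g"
  shows "convex {(y, t). g y \<le> ereal t}"
proof (rule convexI)
  fix p1 p2 and u v :: real
  assume h: "p1 \<in> {(y, t). g y \<le> ereal t}" "p2 \<in> {(y, t). g y \<le> ereal t}"
    "0 \<le> u" "0 \<le> v" "u + v = 1"
  obtain a s b t where p: "p1 = (a, s)" "p2 = (b, t)" by force
  have v: "v = 1 - u" using h(5) by simp
  have "g (u *\<^sub>R a + (1 - u) *\<^sub>R b) \<le> ereal (u * s + (1 - u) * t)"
    using convex_efun_le[OF assms, of a s b t u] h p v by auto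
  then show "u *\<^sub>R p1 + v *\<^sub>R p2 \<in> {(y, t). g y \<le> ereal t}"
    using p v by simp
qed

definition affine_minorant :: "(('a::real_normed_vector \<Rightarrow>\<^sub>L real) \<Rightarrow> ereal) \<Rightarrow> 'a \<Rightarrow> real \<Rightarrow> bool" where
  "affine_minorant g z b \<longleftrightarrow> (\<forall>ys. ereal (blinfun_apply ys z + b) \<le> g ys)"

lemma affine_minorantI:
  assumes "\<And>ys t. g ys \<le> ereal t \<Longrightarrow> blinfun_apply ys z + b \<le> t"
  shows "affine_minorant g z b"
  unfolding affine_minorant_def
proof
  fix ys
  show "ereal (blinfun_apply ys z + b) \<le> g ys"
  proof (cases "g ys")
    case (real G)
    then show ?thesis using assms[of ys G] by simp
  next
    case PInf
    then show ?thesis by simp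
  next
    case MInf
    then show ?thesis using assms[of ys "blinfun_apply ys z + b - 1"] by simp
  qed
qed

lemma affine_minorant_le:
  assumes "affine_minorant g z b" and "g ys \<le> ereal t"
  shows "blinfun_apply ys z + b \<le> t"
proof -
  have "ereal (blinfun_apply ys z + b) \<le> g ys"
    using assms(1) unfolding affine_minorant_def by blast
  from this assms(2) have "ereal (blinfun_apply ys z + b) \<le> ereal t"
    by (rule order_trans)
  then show ?thesis by simp
qed

lemma weak_star_box_segment:
  assumes "d > 0"
  obtains \<tau> where "\<tau> > 0" "y + \<tau> *\<^sub>R v \<in> weak_star_box y xs d"
proof -
  define S where "S = (\<Sum>x\<in>set xs. \<bar>blinfun_apply v x\<bar>)"
  have "S \<ge> 0" unfolding S_def by (simp add: sum_nonneg)
  define \<tau> where "\<tau> = d / (1 + S)"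
  have "\<tau> > 0" unfolding \<tau>_def using assms \<open>S \<ge> 0\<close> by simp
  have "\<tau> * \<bar>blinfun_apply v x\<bar> < d" if "x \<in> set xs" for x
  proof -
    have "\<bar>blinfun_apply v x\<bar> \<le> S"
      unfolding S_def using that by (intro member_le_sum) auto
    then have "\<tau> * \<bar>blinfun_apply v x\<bar> \<le> \<tau> * S"
      using \<open>\<tau> > 0\<close> by (intro mult_left_mono) auto
    also have "\<tau> * S < d"
      unfolding \<tau>_def using assms \<open>S \<ge> 0\<close> by (simp add: field_simps)
    finally show ?thesis .
  qed
  then have "y + \<tau> *\<^sub>R v \<in> weak_star_box y xs d"
    using \<open>\<tau> > 0\<close> by (simp add: weak_star_box_def blinfun.add_left blinfun.scaleR_left abs_mult)
  with \<open>\<tau> > 0\<close> show thesis by (rule that)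
qed

text \<open>The convex sets separated here are \<open>N \<times> (-\<infinity>, c)\<close> and the epigraph of \<open>g\<close>. The gauge \<open>q\<close> is
  weak* continuous, so the separating functional on \<open>X\<^sup>* \<times> \<real>\<close> is an evaluation at a point of \<open>X\<close>
  plus a multiple \<open>\<alpha>\<close> of the real coordinate.\<close>

lemma epigraph_separated_from_weak_star_box:
  fixes g :: "('a::real_normed_vector \<Rightarrow>\<^sub>L real) \<Rightarrow> ereal"
  assumes cvx: "convex_efun g" and ys0: "g ys0 = ereal t0" and d: "d > 0"
    and above: "\<And>y'. y' \<in> weak_star_box y xs d \<Longrightarrow> ereal c < g y'"
  obtains z \<alpha> where
    "\<And>w s ys t. w \<in> weak_star_box y xs d \<Longrightarrow> s < c \<Longrightarrow> g ys \<le> ereal t \<Longrightarrow>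
        blinfun_apply w z + s * \<alpha> \<le> blinfun_apply ys z + t * \<alpha>"
    and "blinfun_apply (ys0 - y) z + (t0 - c + 1) * \<alpha> = 1"
proof -
  define N where "N = weak_star_box y xs d"
  define W where "W = N \<times> {..<c}"
  define E where "E = {(ys, t). g ys \<le> ereal t}"
  define q where "q p = \<bar>snd p\<bar> + (\<Sum>x\<in>set xs. \<bar>blinfun_apply (fst p) x\<bar>) / d"
    for p :: "('a \<Rightarrow>\<^sub>L real) \<times> real"
  have convW: "convex W"
    unfolding W_def N_def by (intro convex_Times convex_weak_star_box convex_real_interval)
  have convE: "convex E"
    unfolding E_def by (rule convex_efun_epigraph[OF cvx])
  have disj: "W \<inter> E = {}"
  proof -
    have False if "w \<in> N" "s < c" "g w \<le> ereal s" for w s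
    proof -
      have "w \<in> weak_star_box y xs d"
        using that(1) unfolding N_def .
      from above[OF this] that(3) have "ereal c < ereal s"
        by (rule order_less_le_trans)
      with \<open>s < c\<close> show False by simp
    qed
    then show ?thesis unfolding W_def E_def by auto
  qed
  have a0: "(y, c - 1) \<in> W"
    unfolding W_def N_def using center_in_weak_star_box[OF d] by simp
  have b0: "(ys0, t0) \<in> E"
    unfolding E_def using ys0 by simp
  have q_nonneg: "q p \<ge> 0" for p
    unfolding q_def using d by (simp add: sum_nonneg)
  have q_scaleR: "q (t *\<^sub>R p) = t * q p" if "t > 0" for t p
  proof -
    have "(\<Sum>x\<in>set xs. \<bar>blinfun_apply (t *\<^sub>R fst p) x\<bar>) = t * (\<Sum>x\<in>set xs. \<bar>blinfun_apply (fst p) x\<bar>)"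
      using that by (simp add: blinfun.scaleR_left abs_mult sum_distrib_left)
    then show ?thesis
      unfolding q_def using that by (simp add: abs_mult distrib_left)
  qed
  have q_ball: "\<exists>a\<in>W. \<exists>b\<in>E. p + ((y, c - 1) - (ys0, t0)) = a - b" if "q p < 1" for p
  proof -
    obtain v s where p: "p = (v, s)" by force
    define S where "S = (\<Sum>x\<in>set xs. \<bar>blinfun_apply v x\<bar>)"
    have "S \<ge> 0" unfolding S_def by (simp add: sum_nonneg)
    have qp: "\<bar>s\<bar> + S / d < 1"
      using that unfolding q_def p S_def by simp
    have "S / d \<ge> 0" using \<open>S \<ge> 0\<close> d by simp
    then have "\<bar>s\<bar> < 1"
      using qp by linarith
    have "S / d < 1"
      using qp \<open>S / d \<ge> 0\<close> by linarith
    then have "S < d" using d by simp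
    have "\<bar>blinfun_apply v x\<bar> < d" if "x \<in> set xs" for x
      using member_le_sum[of x "set xs" "\<lambda>x. \<bar>blinfun_apply v x\<bar>"] that \<open>S < d\<close>
      unfolding S_def by fastforce
    then have "(y + v, c - 1 + s) \<in> W"
      unfolding W_def N_def weak_star_box_def using \<open>\<bar>s\<bar> < 1\<close> by (auto simp: blinfun.add_left)
    moreover have "p + ((y, c - 1) - (ys0, t0)) = (y + v, c - 1 + s) - (ys0, t0)"
      unfolding p by (simp add: algebra_simps)
    ultimately show ?thesis
      using b0 by blast
  qed
  obtain F where F: "linear F" "F ((ys0, t0) - (y, c - 1)) = 1"
    and sep: "\<And>a b. a \<in> W \<Longrightarrow> b \<in> E \<Longrightarrow> F a \<le> F b" and Fq: "\<And>p. F p \<le> q p"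
  proof (rule separation_convex_sets[OF convW convE disj a0 b0])
    show "0 \<le> q p" for p by (rule q_nonneg)
    show "q (t *\<^sub>R p) = t * q p" if "t > 0" for t p using that by (rule q_scaleR)
    show "\<exists>a\<in>W. \<exists>b\<in>E. p + ((y, c - 1) - (ys0, t0)) = a - b" if "q p < 1" for p
      using that by (rule q_ball)
  qed (rule that)
  have "F (v, 0) = 0" if "\<forall>x\<in>set xs. blinfun_apply v x = 0" for v
  proof -
    have "q (v, 0) = 0" "q (- v, 0) = 0"
      unfolding q_def using that by (simp_all add: blinfun.minus_left)
    moreover have "F (- v, 0) = - F (v, 0)"
      using linear_neg[OF F(1), of "(v, 0)"] by simp
    ultimately show ?thesis
      using Fq[of "(v, 0)"] Fq[of "(- v, 0)"] by simp
  qed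
  then obtain z where z: "\<And>v. F (v, 0) = blinfun_apply v z"
    using evaluation_if_vanishes_on_kernels[OF linear_prod_real_split(2)[OF F(1)]] by blast
  define \<alpha> where "\<alpha> = F (0, 1)"
  have split: "F (v, s) = blinfun_apply v z + s * \<alpha>" for v s
    using linear_prod_real_split(1)[OF F(1), of v s] z[of v] unfolding \<alpha>_def by simp
  show thesis
  proof (rule that[of z \<alpha>])
    fix w s ys t
    assume "w \<in> weak_star_box y xs d" "s < c" "g ys \<le> ereal t"
    then have "F (w, s) \<le> F (ys, t)"
      by (intro sep) (auto simp: W_def N_def E_def)
    then show "blinfun_apply w z + s * \<alpha> \<le> blinfun_apply ys z + t * \<alpha>"
      by (simp add: split)
  next
    show "blinfun_apply (ys0 - y) z + (t0 - c + 1) * \<alpha> = 1"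
      using F(2) by (simp add: split blinfun.diff_left algebra_simps)
  qed
qed

lemma affine_minorant_nonvertical:
  assumes "\<alpha> > 0"
    and sep: "\<And>ys t. g ys \<le> ereal t \<Longrightarrow> blinfun_apply y z + s * \<alpha> \<le> blinfun_apply ys z + t * \<alpha>"
  obtains z' b where "affine_minorant g z' b" and "blinfun_apply y z' + b = s"
proof (rule that)
  have eval: "blinfun_apply w (- inverse \<alpha> *\<^sub>R z) = - blinfun_apply w z / \<alpha>" for w
    by (simp add: blinfun.scaleR_right blinfun.minus_right divide_inverse mult.commute)
  show "affine_minorant g (- inverse \<alpha> *\<^sub>R z) (s + blinfun_apply y z / \<alpha>)"
  proof (rule affine_minorantI)
    fix ys t assume "g ys \<le> ereal t"
    from sep[OF this] have "blinfun_apply y z - blinfun_apply ys z \<le> (t - s) * \<alpha>"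
      by (simp add: algebra_simps)
    then have "(blinfun_apply y z - blinfun_apply ys z) / \<alpha> \<le> t - s"
      by (simp only: pos_divide_le_eq[OF \<open>\<alpha> > 0\<close>])
    then have "(blinfun_apply y z - blinfun_apply ys z) / \<alpha> + s \<le> t" by simp
    then show "blinfun_apply ys (- inverse \<alpha> *\<^sub>R z) + (s + blinfun_apply y z / \<alpha>) \<le> t"
      unfolding eval by (simp add: diff_divide_distrib)
  qed
  show "blinfun_apply y (- inverse \<alpha> *\<^sub>R z) + (s + blinfun_apply y z / \<alpha>) = s"
    unfolding eval by simp
qed

lemma affine_minorant_vertical:
  assumes minor: "affine_minorant g x1 b1" and "\<tau> > 0"
    and sep: "\<And>ys t. g ys \<le> ereal t \<Longrightarrow> blinfun_apply y z + \<tau> \<le> blinfun_apply ys z"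
  shows "\<exists>z' b. affine_minorant g z' b \<and> r < blinfun_apply y z' + b"
proof -
  define M where "M = max 0 ((r - blinfun_apply y x1 - b1 + 1) / \<tau>)"
  have "M \<ge> 0"
    unfolding M_def by (rule max.cobounded1)
  have "(r - blinfun_apply y x1 - b1 + 1) / \<tau> \<le> M"
    unfolding M_def by (rule max.cobounded2)
  then have M: "r - blinfun_apply y x1 - b1 + 1 \<le> M * \<tau>"
    by (simp only: pos_divide_le_eq[OF \<open>\<tau> > 0\<close>])
  define z' where "z' = x1 - M *\<^sub>R z"
  define b where "b = b1 + M * (blinfun_apply y z + \<tau>)"
  have "affine_minorant g z' b"
  proof (rule affine_minorantI)
    fix ys t assume t: "g ys \<le> ereal t"
    have "M * (blinfun_apply y z + \<tau>) \<le> M * blinfun_apply ys z"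
      using sep[OF t] \<open>M \<ge> 0\<close> by (intro mult_left_mono) auto
    then have "blinfun_apply ys z' + b \<le> blinfun_apply ys x1 + b1"
      unfolding z'_def b_def by (simp add: blinfun.diff_right blinfun.scaleR_right)
    also have "\<dots> \<le> t"
      using affine_minorant_le[OF minor t] .
    finally show "blinfun_apply ys z' + b \<le> t" .
  qed
  moreover have "r < blinfun_apply y z' + b"
    unfolding z'_def b_def using M by (simp add: blinfun.diff_right blinfun.scaleR_right algebra_simps)
  ultimately show ?thesis by blast
qed

text \<open>Weak* lower semicontinuity makes a convex \<open>g\<close> the supremum of its affine minorants
  \<open>y \<mapsto> \<langle>y, z\<rangle> + b\<close> with \<open>z \<in> X\<close> (Fenchel--Moreau). An affine minorant is needed to start with:
  if the separating hyperplane is vertical, it is tilted by adding a large multiple of it.\<close>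

theorem weak_star_lsc_affine_minorant_above:
  fixes g :: "('a::real_normed_vector \<Rightarrow>\<^sub>L real) \<Rightarrow> ereal"
  assumes cvx: "convex_efun g" and lsc: "weak_star_lsc g" and nm: "\<And>y. g y \<noteq> -\<infinity>"
    and minor: "affine_minorant g x1 b1" and dom: "g ys0 < \<infinity>" and r: "ereal r < g y"
  shows "\<exists>z b. affine_minorant g z b \<and> r < blinfun_apply y z + b"
proof -
  obtain c where c: "r < c" "ereal c < g y"
  proof (cases "g y")
    case (real G)
    then show ?thesis using that[of "(r + G) / 2"] r by simp
  next
    case PInf
    then show ?thesis using that[of "r + 1"] by simp
  next
    case MInf
    then show ?thesis using r by simp
  qed
  define s0 where "s0 = (r + c) / 2"
  have s0: "r < s0" "s0 < c" using c(1) unfolding s0_def by auto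
  have "closedin weak_star_topology {f. g f \<le> ereal c}"
    using lsc unfolding weak_star_lsc_def by blast
  moreover have "y \<notin> {f. g f \<le> ereal c}"
    using c(2) by auto
  ultimately obtain xs d where d: "d > 0" and box: "weak_star_box y xs d \<inter> {f. g f \<le> ereal c} = {}"
    using closedin_weak_star_topology_box by blast
  obtain t0 where t0: "g ys0 = ereal t0"
    using dom nm[of ys0] by (cases "g ys0") auto
  obtain z \<alpha> where
    sep: "\<And>w s ys t. w \<in> weak_star_box y xs d \<Longrightarrow> s < c \<Longrightarrow> g ys \<le> ereal t \<Longrightarrow>
        blinfun_apply w z + s * \<alpha> \<le> blinfun_apply ys z + t * \<alpha>"
    and normal: "blinfun_apply (ys0 - y) z + (t0 - c + 1) * \<alpha> = 1"
  proof (rule epigraph_separated_from_weak_star_box[OF cvx t0 d])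
    show "ereal c < g y'" if "y' \<in> weak_star_box y xs d" for y'
      using box that by (auto simp: not_le)
  qed (rule that)
  have y_box: "y \<in> weak_star_box y xs d" by (rule center_in_weak_star_box[OF d])
  have "\<alpha> \<ge> 0"
  proof (rule ccontr)
    assume "\<not> \<alpha> \<ge> 0"
    define K where "K = blinfun_apply ys0 z + t0 * \<alpha> - blinfun_apply y z - (c - 1) * \<alpha>"
    define n where "n = max 0 ((K + 1) / (- \<alpha>))"
    have "0 < - \<alpha>" using \<open>\<not> \<alpha> \<ge> 0\<close> by simp
    have "(K + 1) / (- \<alpha>) \<le> n"
      unfolding n_def by (rule max.cobounded2)
    then have n: "K + 1 \<le> n * (- \<alpha>)"
      by (simp only: pos_divide_le_eq[OF \<open>0 < - \<alpha>\<close>])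
    have "blinfun_apply y z + (c - 1) * \<alpha> \<le> blinfun_apply ys0 z + (t0 + n) * \<alpha>"
      by (rule sep[OF y_box]) (use t0 n_def in simp_all)
    with n show False unfolding K_def by (simp add: algebra_simps)
  qed
  show ?thesis
  proof (cases "\<alpha> > 0")
    case True
    show ?thesis
    proof (rule affine_minorant_nonvertical[OF True])
      show "blinfun_apply y z + s0 * \<alpha> \<le> blinfun_apply ys z + t * \<alpha>" if "g ys \<le> ereal t" for ys t
        using sep[OF y_box s0(2) that] .
    next
      fix z' b assume "affine_minorant g z' b" "blinfun_apply y z' + b = s0"
      then show ?thesis using s0(1) by auto
    qed
  next
    case False
    with \<open>\<alpha> \<ge> 0\<close> have "\<alpha> = 0" by simp
    obtain \<tau> where "\<tau> > 0" and "y + \<tau> *\<^sub>R (ys0 - y) \<in> weak_star_box y xs d"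
      by (rule weak_star_box_segment[OF d]) (rule that)
    note sep_tilted = sep[OF this(2) s0(2)]
    show ?thesis
    proof (rule affine_minorant_vertical[OF minor \<open>\<tau> > 0\<close>])
      show "blinfun_apply y z + \<tau> \<le> blinfun_apply ys z" if "g ys \<le> ereal t" for ys t
        using sep_tilted[OF that] normal \<open>\<alpha> = 0\<close> by (simp add: blinfun.add_left blinfun.scaleR_left)
    qed
  qed
qed

definition ekeland_set :: "('a::metric_space \<Rightarrow> real) \<Rightarrow> real \<Rightarrow> 'a \<Rightarrow> 'a set" where
  "ekeland_set f l x = {y. f y + l * dist y x \<le> f x}"

lemma ekeland_set_refl: "x \<in> ekeland_set f l x"
  by (simp add: ekeland_set_def)

lemma ekeland_set_trans:
  assumes "l \<ge> 0" "y \<in> ekeland_set f l x" "z \<in> ekeland_set f l y"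
  shows "z \<in> ekeland_set f l x"
proof -
  have "l * dist z x \<le> l * (dist z y + dist y x)"
    using dist_triangle[of z x y] assms(1) by (rule mult_left_mono)
  then show ?thesis
    using assms(2,3) unfolding ekeland_set_def by (simp add: distrib_left)
qed

lemma ekeland_sequence:
  fixes f :: "'a::metric_space \<Rightarrow> real"
  assumes bdd: "\<And>x. m \<le> f x" and l: "l > 0"
  obtains X where "X 0 = x0" and "\<And>n. ekeland_set f l (X (Suc n)) \<subseteq> ekeland_set f l (X n)"
    and "\<And>n y. y \<in> ekeland_set f l (X (Suc n)) \<Longrightarrow> dist y (X (Suc n)) \<le> (1/2)^n / l"
proof -
  let ?S = "ekeland_set f l"
  have "\<exists>y. y \<in> ?S x \<and> f y < Inf (f ` ?S x) + (1/2)^n" for x n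
  proof -
    have "f ` ?S x \<noteq> {}" using ekeland_set_refl by blast
    then have "\<exists>v\<in>f ` ?S x. v < Inf (f ` ?S x) + (1/2)^n"
      by (rule cInf_lessD) simp
    then show ?thesis by blast
  qed
  define nxt where "nxt n x = (SOME y. y \<in> ?S x \<and> f y < Inf (f ` ?S x) + (1/2)^n)" for n x
  have nxt: "nxt n x \<in> ?S x" "f (nxt n x) < Inf (f ` ?S x) + (1/2)^n" for n x
    using someI_ex[OF \<open>\<exists>y. y \<in> ?S x \<and> f y < Inf (f ` ?S x) + (1/2)^n\<close>] unfolding nxt_def by blast+
  define X where "X = rec_nat x0 nxt"
  have X: "X 0 = x0" "X (Suc n) = nxt n (X n)" for n
    unfolding X_def by simp_all
  have nest: "?S (X (Suc n)) \<subseteq> ?S (X n)" for n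
  proof
    fix z assume "z \<in> ?S (X (Suc n))"
    then have "z \<in> ?S (nxt n (X n))" by (simp only: X(2))
    then show "z \<in> ?S (X n)" by (rule ekeland_set_trans[OF less_imp_le[OF l] nxt(1)])
  qed
  have "dist y (X (Suc n)) \<le> (1/2)^n / l" if "y \<in> ?S (X (Suc n))" for y n
  proof -
    have "Inf (f ` ?S (X n)) \<le> f y"
      by (rule cInf_lower) (use nest that bdd in \<open>auto intro: bdd_belowI[of _ m]\<close>)
    moreover have "f y + l * dist y (X (Suc n)) \<le> f (X (Suc n))"
      using that unfolding ekeland_set_def by simp
    moreover have "f (X (Suc n)) < Inf (f ` ?S (X n)) + (1/2)^n"
      using nxt(2) X(2) by simp
    ultimately have "l * dist y (X (Suc n)) \<le> (1/2)^n" by linarith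
    then show ?thesis using l by (simp add: pos_le_divide_eq mult.commute)
  qed
  with X(1) nest show thesis by (rule that)
qed

lemma ekeland_sequence_Cauchy:
  fixes X :: "nat \<Rightarrow> 'a::metric_space"
  assumes l: "l > 0" and nested: "\<And>n k. n \<le> k \<Longrightarrow> X k \<in> S n"
    and small: "\<And>n y. y \<in> S (Suc n) \<Longrightarrow> dist y (X (Suc n)) \<le> (1/2)^n / l"
  shows "Cauchy X"
proof (rule metric_CauchyI)
  fix e :: real assume "e > 0"
  obtain N where N: "(1/2::real)^N < e * l / 2"
    using real_arch_pow_inv[of "e * l / 2" "1/2"] \<open>e > 0\<close> l by auto
  have "dist (X a) (X b) < e" if "a \<ge> Suc N" "b \<ge> Suc N" for a b
  proof -
    have "dist (X a) (X b) \<le> dist (X a) (X (Suc N)) + dist (X b) (X (Suc N))"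
      by (rule dist_triangle2)
    also have "\<dots> \<le> (1/2)^N / l + (1/2)^N / l"
      using small[OF nested[OF that(1)]] small[OF nested[OF that(2)]] by simp
    also have "\<dots> < e"
      using N l by (simp add: field_simps)
    finally show ?thesis .
  qed
  then show "\<exists>M. \<forall>m\<ge>M. \<forall>n\<ge>M. dist (X m) (X n) < e" by blast
qed

lemma closed_sublevel_penalized_limit:
  fixes f :: "'a::metric_space \<Rightarrow> real"
  assumes lsc: "\<And>c. closed {x. f x \<le> c}" and l: "l \<ge> 0" and lim: "X \<longlonglongrightarrow> y"
    and ev: "\<And>k. k \<ge> N \<Longrightarrow> f (X k) + l * dist (X k) z \<le> c"
  shows "f y + l * dist y z \<le> c"
proof (rule field_le_epsilon)
  fix e :: real assume e: "e > 0"
  have "(\<lambda>k. dist (X k) z) \<longlonglongrightarrow> dist y z"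
    using lim by (intro tendsto_dist) auto
  then have "\<forall>\<^sub>F k in sequentially. dist (X k) z > dist y z - e / (l + 1)"
    using e l by (intro order_tendstoD(1)) auto
  then obtain N2 where N2: "\<And>k. k \<ge> N2 \<Longrightarrow> dist (X k) z > dist y z - e / (l + 1)"
    unfolding eventually_sequentially by blast
  define c' where "c' = c - l * dist y z + e"
  have inS: "f (X (k + max N N2)) \<le> c'" for k
  proof -
    have k: "k + max N N2 \<ge> N" "k + max N N2 \<ge> N2" by auto
    have "l * (dist y z - e / (l + 1)) \<le> l * dist (X (k + max N N2)) z"
      using N2[OF k(2)] l by (intro mult_left_mono) auto
    moreover have "l * (e / (l + 1)) \<le> e"
      using l e by (simp add: field_simps)
    ultimately show ?thesis
      using ev[OF k(1)] unfolding c'_def by (simp add: algebra_simps)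
  qed
  have lim': "(\<lambda>k. X (k + max N N2)) \<longlonglongrightarrow> y"
    using lim by (rule LIMSEQ_ignore_initial_segment)
  have "y \<in> {x. f x \<le> c'}"
    by (rule closed_sequentially[OF lsc[of c'] _ lim']) (use inS in auto)
  then show "f y + l * dist y z \<le> c + e"
    unfolding c'_def by simp
qed

theorem ekeland_variational_principle:
  fixes f :: "'a::complete_space \<Rightarrow> real"
  assumes lsc: "\<And>c. closed {x. f x \<le> c}" and bdd: "\<And>x. m \<le> f x" and l: "l > 0"
  obtains xe where "f xe + l * dist xe x0 \<le> f x0" and "\<And>y. f xe \<le> f y + l * dist y xe"
proof -
  let ?S = "ekeland_set f l"
  obtain X where X0: "X 0 = x0" and nest: "\<And>n. ?S (X (Suc n)) \<subseteq> ?S (X n)"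
    and small: "\<And>n y. y \<in> ?S (X (Suc n)) \<Longrightarrow> dist y (X (Suc n)) \<le> (1/2)^n / l"
    by (rule ekeland_sequence[OF bdd l]) (rule that)
  have nested: "X k \<in> ?S (X n)" if "n \<le> k" for n k
    using lift_Suc_antimono_le[of "\<lambda>n. ?S (X n)", OF nest that] ekeland_set_refl by blast
  from l nested small have "Cauchy X"
    by (rule ekeland_sequence_Cauchy)
  then obtain xe where lim: "X \<longlonglongrightarrow> xe"
    using Cauchy_convergent_iff convergent_def by blast
  have xe: "xe \<in> ?S (X n)" for n
  proof -
    have "f xe + l * dist xe (X n) \<le> f (X n)"
      by (rule closed_sublevel_penalized_limit[OF lsc less_imp_le[OF l] lim, where N = n])
        (use nested in \<open>auto simp: ekeland_set_def\<close>)
    then show ?thesis unfolding ekeland_set_def by simp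
  qed
  show thesis
  proof (rule that)
    show "f xe + l * dist xe x0 \<le> f x0"
      using xe[of 0] X0 unfolding ekeland_set_def by simp
  next
    fix y
    show "f xe \<le> f y + l * dist y xe"
    proof (rule ccontr)
      assume "\<not> ?thesis"
      then have "y \<in> ?S xe" and "y \<noteq> xe"
        unfolding ekeland_set_def by auto
      \<comment> \<open>Both \<open>y\<close> and \<open>xe\<close> lie in every \<open>S (X (Suc n))\<close>, whose radius tends to \<open>0\<close>.\<close>
      have bound: "dist y xe \<le> 2 * ((1/2)^n / l)" for n
      proof -
        have yS: "y \<in> ?S (X (Suc n))"
          using ekeland_set_trans[OF less_imp_le[OF l] xe \<open>y \<in> ?S xe\<close>] .
        show ?thesis
          using small[OF yS] small[OF xe[of "Suc n"]] dist_triangle2[of y xe "X (Suc n)"] by simp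
      qed
      obtain N where "(1/2::real)^N < dist y xe * l / 2"
        using real_arch_pow_inv[of "dist y xe * l / 2" "1/2"] \<open>y \<noteq> xe\<close> l by auto
      then have "2 * ((1/2)^N / l) < dist y xe"
        using l by (simp add: field_simps)
      with bound[of N] show False by linarith
    qed
  qed
qed

lemma ekeland_sup_family:
  fixes h :: "'i \<Rightarrow> 'a::complete_space \<Rightarrow> real"
  assumes cont: "\<And>i. i \<in> I \<Longrightarrow> continuous_on UNIV (h i)"
    and below: "\<And>x. \<exists>i\<in>I. m \<le> h i x"
    and start: "\<And>i. i \<in> I \<Longrightarrow> h i x0 \<le> m + e" and "e \<ge> 0" and l: "l > 0"
  obtains xe v where "dist xe x0 \<le> e / l" and "m \<le> v" and "\<And>i. i \<in> I \<Longrightarrow> h i xe \<le> v"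
    and "\<And>x t. (\<And>i. i \<in> I \<Longrightarrow> h i x \<le> t) \<Longrightarrow> v - l * dist x xe \<le> t"
proof -
  \<comment> \<open>Truncating at \<open>M\<close> keeps the supremum real-valued without changing it near \<open>x0\<close>.\<close>
  define M where "M = m + e + 1"
  define \<phi> where "\<phi> x = Sup ((\<lambda>i. min M (h i x)) ` I)" for x
  have ne: "(\<lambda>i. min M (h i x)) ` I \<noteq> {}" and bdd: "bdd_above ((\<lambda>i. min M (h i x)) ` I)" for x
    using below by (auto intro: bdd_aboveI[of _ M])
  have \<phi>_le: "\<phi> x \<le> c \<longleftrightarrow> (\<forall>i\<in>I. min M (h i x) \<le> c)" for x c
    unfolding \<phi>_def using cSup_le_iff[OF ne bdd] by simp
  have \<phi>_ge: "min M (h i x) \<le> \<phi> x" if "i \<in> I" for i x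
    unfolding \<phi>_def by (rule cSup_upper[OF _ bdd]) (use that in blast)
  have "closed {x. \<phi> x \<le> c}" for c
  proof -
    have "{x. \<phi> x \<le> c} = (\<Inter>i\<in>I. {x. min M (h i x) \<le> c})"
      using \<phi>_le by auto
    then show ?thesis
      using cont by (auto intro!: closed_INT closed_Collect_le continuous_on_min continuous_on_const)
  qed
  moreover have "m \<le> \<phi> x" for x
  proof -
    obtain i where "i \<in> I" "m \<le> h i x" using below by blast
    moreover have "m \<le> M" unfolding M_def using \<open>e \<ge> 0\<close> by simp
    ultimately have "m \<le> min M (h i x)" by simp
    also have "\<dots> \<le> \<phi> x" using \<phi>_ge[OF \<open>i \<in> I\<close>] .
    finally show ?thesis .
  qed
  ultimately obtain xe where E1: "\<phi> xe + l * dist xe x0 \<le> \<phi> x0"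
    and E2: "\<And>y. \<phi> xe \<le> \<phi> y + l * dist y xe"
    by (rule ekeland_variational_principle[where f = \<phi> and m = m and l = l, OF _ _ l]) (rule that)
  have "\<phi> x0 \<le> m + e"
    unfolding \<phi>_le using start by (auto simp: min_le_iff_disj)
  have "m \<le> \<phi> xe" by fact
  show thesis
  proof (rule that[of xe "\<phi> xe"])
    show "dist xe x0 \<le> e / l"
      using E1 \<open>\<phi> x0 \<le> m + e\<close> \<open>m \<le> \<phi> xe\<close> l by (simp add: pos_le_divide_eq mult.commute)
    show "m \<le> \<phi> xe" by fact
    show "h i xe \<le> \<phi> xe" if "i \<in> I" for i
    proof -
      have "0 \<le> l * dist xe x0" using l by simp
      then have "\<phi> xe < M"
        using E1 \<open>\<phi> x0 \<le> m + e\<close> unfolding M_def by linarith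
      then show ?thesis
        using \<phi>_ge[OF that, of xe] by (simp add: min_le_iff_disj)
    qed
    show "\<phi> xe - l * dist x xe \<le> t" if "\<And>i. i \<in> I \<Longrightarrow> h i x \<le> t" for x t
    proof -
      have "\<phi> x \<le> t"
        unfolding \<phi>_le using that by (auto simp: min_le_iff_disj)
      then show ?thesis using E2[of x] by simp
    qed
  qed
qed

lemma convex_below_norm_cone:
  fixes l :: real
  assumes "l \<ge> 0"
  shows "convex {(x :: 'a::real_normed_vector, t). t < - l * norm x}"
proof (rule convexI)
  fix p1 p2 :: "'a \<times> real" and u v :: real
  assume h: "p1 \<in> {(x, t). t < - l * norm x}" "p2 \<in> {(x, t). t < - l * norm x}"
    "0 \<le> u" "0 \<le> v" "u + v = 1"
  obtain x1 t1 x2 t2 where p: "p1 = (x1, t1)" "p2 = (x2, t2)" by force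
  have t: "t1 < - l * norm x1" "t2 < - l * norm x2"
    using h p by auto
  have "u * t1 + v * t2 < u * (- l * norm x1) + v * (- l * norm x2)"
  proof (cases "u = 0")
    case True
    then show ?thesis using h(5) t by simp
  next
    case False
    then have "u * t1 < u * (- l * norm x1)"
      using h(3) t(1) by (intro mult_strict_left_mono) auto
    moreover have "v * t2 \<le> v * (- l * norm x2)"
      using h(4) t(2) by (intro mult_left_mono) auto
    ultimately show ?thesis by simp
  qed
  also have "\<dots> \<le> - l * norm (u *\<^sub>R x1 + v *\<^sub>R x2)"
  proof -
    have "norm (u *\<^sub>R x1 + v *\<^sub>R x2) \<le> u * norm x1 + v * norm x2"
      using norm_triangle_ineq[of "u *\<^sub>R x1" "v *\<^sub>R x2"] h(3,4) by simp
    then have "l * norm (u *\<^sub>R x1 + v *\<^sub>R x2) \<le> l * (u * norm x1 + v * norm x2)"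
      using assms by (rule mult_left_mono)
    then show ?thesis by (simp add: algebra_simps)
  qed
  finally show "u *\<^sub>R p1 + v *\<^sub>R p2 \<in> {(x, t). t < - l * norm x}"
    using p by simp
qed

lemma blinfun_of_bounded_linear_functional:
  fixes f :: "'a::real_normed_vector \<Rightarrow> real"
  assumes "linear f" and bound: "\<And>x. \<bar>f x\<bar> \<le> l * norm x" and "l \<ge> 0"
  obtains L where "blinfun_apply L = f" and "norm L \<le> l"
proof -
  have "bounded_linear f"
  proof (rule bounded_linear_intro[where K = l])
    show "f (x + y) = f x + f y" for x y by (rule linear_add[OF assms(1)])
    show "f (r *\<^sub>R x) = r *\<^sub>R f x" for r x by (rule linear_scale[OF assms(1)])
    show "norm (f x) \<le> norm x * l" for x using bound[of x] by (simp add: mult.commute)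
  qed
  then have L: "blinfun_apply (Blinfun f) = f"
    by (rule bounded_linear_Blinfun_apply)
  moreover have "norm (Blinfun f) \<le> l"
    by (rule norm_blinfun_bound) (use \<open>l \<ge> 0\<close> bound L in auto)
  ultimately show thesis by (rule that)
qed

text \<open>A convex set lying above the cone \<open>t = - l \<parallel>x\<parallel>\<close> and touching it at the origin lies above
  the graph of a functional of norm at most \<open>l\<close>: separate it from the open region below the cone.\<close>

lemma linear_minorant_above_cone:
  fixes A :: "('a::real_normed_vector \<times> real) set"
  assumes A: "convex A" and A0: "(0, 0) \<in> A" and "l \<ge> 0"
    and cone: "\<And>x t. (x, t) \<in> A \<Longrightarrow> - l * norm x \<le> t"
  obtains L :: "'a \<Rightarrow>\<^sub>L real" where "norm L \<le> l" and "\<And>x t. (x, t) \<in> A \<Longrightarrow> blinfun_apply L x \<le> t"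
proof -
  define B where "B = {(x :: 'a, t). t < - l * norm x}"
  define q where "q p = 2 * (\<bar>snd p\<bar> + l * norm (fst p))" for p :: "'a \<times> real"
  have convB: "convex B"
    unfolding B_def by (rule convex_below_norm_cone[OF \<open>l \<ge> 0\<close>])
  have disj: "A \<inter> B = {}"
    using cone unfolding B_def by fastforce
  have b0: "(0, - 1) \<in> B"
    unfolding B_def by simp
  have q_nonneg: "q p \<ge> 0" for p
    unfolding q_def using \<open>l \<ge> 0\<close> by simp
  have q_scaleR: "q (t *\<^sub>R p) = t * q p" if "t > 0" for t p
    unfolding q_def using that by (simp add: abs_mult algebra_simps)
  have q_ball: "\<exists>a\<in>A. \<exists>b\<in>B. p + ((0, 0) - (0, - 1)) = a - b" if "q p < 1" for p
  proof -
    define m where "m = l * norm (fst p)"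
    have m0: "0 \<le> m"
      unfolding m_def using \<open>l \<ge> 0\<close> by simp
    have qm: "2 * \<bar>snd p\<bar> + 2 * m < 1"
      using that unfolding m_def q_def by simp
    have "2 * \<bar>snd p\<bar> < 1"
      using m0 qm by linarith
    moreover have "2 * m < 1"
      using m0 qm abs_ge_zero[of "snd p"] by linarith
    ultimately have "- snd p - 1 < - (l * norm (fst p))"
      unfolding m_def by (auto simp: abs_less_iff)
    then have "(- fst p, - snd p - 1) \<in> B"
      unfolding B_def by simp
    moreover have "p + ((0, 0) - (0, - 1)) = (0, 0) - (- fst p, - snd p - 1)"
      by (cases p) simp
    ultimately show ?thesis using A0 by blast
  qed
  obtain F where F: "linear F" "F ((0, - 1) - (0, 0)) = 1"
    and sep: "\<And>a b. a \<in> A \<Longrightarrow> b \<in> B \<Longrightarrow> F a \<le> F b" and Fq: "\<And>p. F p \<le> q p"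
  proof (rule separation_convex_sets[OF A convB disj A0 b0])
    show "0 \<le> q p" for p by (rule q_nonneg)
    show "q (t *\<^sub>R p) = t * q p" if "t > 0" for t p using that by (rule q_scaleR)
    show "\<exists>a\<in>A. \<exists>b\<in>B. p + ((0, 0) - (0, - 1)) = a - b" if "q p < 1" for p
      using that by (rule q_ball)
  qed (rule that)
  define f where "f x = F (x, 0)" for x
  have "F (0, - 1) = 1"
    using F(2) by simp
  moreover have "F (0, - 1) = - F (0, 1)"
    using linear_neg[OF F(1), of "(0, 1)"] by simp
  ultimately have "F (0, 1) = - 1"
    by linarith
  then have split: "F (x, t) = f x - t" for x t
    unfolding f_def using linear_prod_real_split(1)[OF F(1), of x t] by simp
  have "linear f"
    unfolding f_def by (rule linear_prod_real_split(2)[OF F(1)])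
  have lower: "- f y \<le> l * norm y" for y
  proof (rule field_le_epsilon)
    fix e :: real assume "e > 0"
    then have "(y, - l * norm y - e) \<in> B"
      unfolding B_def by simp
    from sep[OF A0 this] show "- f y \<le> l * norm y + e"
      using linear_0[OF \<open>linear f\<close>] by (simp add: split)
  qed
  have "\<bar>f y\<bar> \<le> l * norm y" for y
    using lower[of y] lower[of "- y"] linear_neg[OF \<open>linear f\<close>, of y] by (simp add: abs_le_iff)
  then obtain L where L: "blinfun_apply L = f" and "norm L \<le> l"
    by (rule blinfun_of_bounded_linear_functional[OF \<open>linear f\<close> _ \<open>l \<ge> 0\<close>]) (rule that)
  have above: "f x \<le> t" if "(x, t) \<in> A" for x t
  proof (rule field_le_epsilon)
    fix e :: real assume "e > 0"
    then have "(0, - e) \<in> B"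
      unfolding B_def by simp
    from sep[OF that this] show "f x \<le> t + e"
      using linear_0[OF \<open>linear f\<close>] by (simp add: split)
  qed
  show thesis
  proof (rule that)
    show "norm L \<le> l" by fact
    show "blinfun_apply L x \<le> t" if "(x, t) \<in> A" for x t
      using above[OF that] L by simp
  qed
qed

lemma convex_epigraph_sup_blinfun:
  fixes f :: "'i \<Rightarrow> 'a::real_normed_vector \<Rightarrow>\<^sub>L real"
  shows "convex {(x, t). \<forall>i\<in>I. blinfun_apply (f i) x - c i \<le> t}"
proof -
  have "{(x, t). \<forall>i\<in>I. blinfun_apply (f i) x - c i \<le> t} =
      (\<Inter>i\<in>I. (\<lambda>(x, t). blinfun_apply (f i) x - t) -` {..c i})"
    by auto
  moreover have "linear (\<lambda>(x, t). blinfun_apply (f i) x - t)" for i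
    by (rule linearI) (auto simp: case_prod_beta blinfun.add_right blinfun.scaleR_right algebra_simps)
  ultimately show ?thesis
    by (auto intro!: convex_INT convex_linear_vimage convex_real_interval)
qed

lemma eps_subdiff_X_D:
  assumes "x \<in> eps_subdiff_X g e xs" "g xs = ereal a" "g ys = ereal c"
  shows "blinfun_apply (ys - xs) x \<le> c - a + e"
proof -
  have "ereal (blinfun_apply (ys - xs) x) \<le> g ys - g xs + ereal e"
    using assms(1) unfolding eps_subdiff_X_def by blast
  then show ?thesis using assms(2,3) by simp
qed

lemma eps_subdiff_X_mono:
  assumes "e \<le> e'"
  shows "eps_subdiff_X g e xs \<subseteq> eps_subdiff_X g e' xs"
  unfolding eps_subdiff_X_def
proof (intro subsetI CollectI allI)
  fix x ys
  assume "x \<in> {x. \<forall>ys. ereal (blinfun_apply (ys - xs) x) \<le> g ys - g xs + ereal e}"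
  then have "ereal (blinfun_apply (ys - xs) x) \<le> g ys - g xs + ereal e" by blast
  also have "\<dots> \<le> g ys - g xs + ereal e'"
    using assms by (intro add_left_mono) simp
  finally show "ereal (blinfun_apply (ys - xs) x) \<le> g ys - g xs + ereal e'" .
qed

lemma affine_minorant_of_eps_subdiff_X:
  assumes "x \<in> eps_subdiff_X g e xs" and "g xs = ereal a"
  shows "affine_minorant g x (a - blinfun_apply xs x - e)"
proof (rule affine_minorantI)
  fix ys t assume "g ys \<le> ereal t"
  have "ereal (blinfun_apply (ys - xs) x) \<le> g ys - ereal a + ereal e"
    using assms unfolding eps_subdiff_X_def by simp
  also have "\<dots> \<le> ereal t - ereal a + ereal e"
    using \<open>g ys \<le> ereal t\<close> by (intro add_right_mono ereal_minus_mono) auto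
  also have "\<dots> = ereal (t - a + e)" by simp
  finally show "blinfun_apply ys x + (a - blinfun_apply xs x - e) \<le> t"
    by (simp add: blinfun.diff_left)
qed

text \<open>Changing the base point of an \<open>\<epsilon>\<close>-subgradient to a point where \<open>xe\<close> is an exact subgradient
  costs the cross term \<open>\<langle>xe - x0, xes - x0s\<rangle>\<close>; the two inequalities are the defining ones tested
  at \<open>xes\<close> and at \<open>x0s\<close>.\<close>

lemma eps_subdiff_X_rebase:
  assumes x0: "x0 \<in> eps_subdiff_X g e x0s" and xe: "xe \<in> eps_subdiff_X g 0 xes"
    and a: "g x0s = ereal a" and b: "g xes = ereal b"
  shows "x0 \<in> eps_subdiff_X g (e + blinfun_apply (xes - x0s) (xe - x0)) xes"
    and "blinfun_apply (xes - x0s) x0 - e \<le> b - a" "b - a \<le> blinfun_apply (xes - x0s) xe"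
proof -
  have key: "blinfun_apply (x0s - xes) xe \<le> a - b"
    using eps_subdiff_X_D[OF xe b a] by simp
  then show "b - a \<le> blinfun_apply (xes - x0s) xe"
    by (simp add: blinfun.diff_left)
  show "blinfun_apply (xes - x0s) x0 - e \<le> b - a"
    using eps_subdiff_X_D[OF x0 a b] by simp
  show "x0 \<in> eps_subdiff_X g (e + blinfun_apply (xes - x0s) (xe - x0)) xes"
    unfolding eps_subdiff_X_def
  proof (intro CollectI allI)
    fix ys
    have sub: "ereal (blinfun_apply (ys - x0s) x0) \<le> g ys - g x0s + ereal e"
      using x0 unfolding eps_subdiff_X_def by blast
    show "ereal (blinfun_apply (ys - xes) x0) \<le> g ys - g xes + ereal (e + blinfun_apply (xes - x0s) (xe - x0))"
    proof (cases "g ys")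
      case (real c)
      have "blinfun_apply (ys - x0s) x0 \<le> c - a + e"
        using eps_subdiff_X_D[OF x0 a real] .
      with key have "blinfun_apply (ys - xes) x0 \<le> c - b + (e + blinfun_apply (xes - x0s) (xe - x0))"
        by (simp add: blinfun.diff_left blinfun.diff_right)
      then show ?thesis using real b by simp
    next
      case PInf
      then show ?thesis using b by simp
    next
      case MInf
      then show ?thesis using sub a by simp
    qed
  qed
qed

text \<open>The Fenchel--Young equality case, read backwards through Fenchel--Moreau: if \<open>xes\<close> is a
  subgradient at \<open>xe\<close> of the conjugate \<open>g\<^sup>*(x) = sup\<^sub>y (\<langle>y, x\<rangle> - g y)\<close>, with
  \<open>r = \<langle>xes, xe\<rangle> - g\<^sup>* xe\<close>, then \<open>g xes = r\<close> and \<open>xe\<close> is a subgradient of \<open>g\<close> at \<open>xes\<close>.\<close>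

lemma eps_subdiff_X_of_conjugate_subgradient:
  fixes g :: "('a::real_normed_vector \<Rightarrow>\<^sub>L real) \<Rightarrow> ereal"
  assumes cvx: "convex_efun g" and lsc: "weak_star_lsc g" and nm: "\<And>y. g y \<noteq> -\<infinity>"
    and minor: "affine_minorant g x1 b1" and dom: "g ys0 < \<infinity>"
    and conj_at: "\<And>ys. g ys < \<infinity> \<Longrightarrow> blinfun_apply ys xe - real_of_ereal (g ys) \<le> blinfun_apply xes xe - r"
    and conj_sub: "\<And>x t. (\<And>ys. g ys < \<infinity> \<Longrightarrow> blinfun_apply ys x - real_of_ereal (g ys) \<le> t) \<Longrightarrow>
        blinfun_apply xes x - t \<le> r"
  shows "g xes = ereal r" and "xe \<in> eps_subdiff_X g 0 xes"
proof -
  have finite: "\<exists>c. g ys = ereal c" if "g ys < \<infinity>" for ys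
    using that nm[of ys] by (cases "g ys") auto
  have "g xes \<le> ereal r"
  proof (rule ccontr)
    assume "\<not> g xes \<le> ereal r"
    then obtain z b where zb: "affine_minorant g z b" and "r < blinfun_apply xes z + b"
      using weak_star_lsc_affine_minorant_above[OF cvx lsc nm minor dom] by (meson not_le)
    have "blinfun_apply ys z - real_of_ereal (g ys) \<le> - b" if fin: "g ys < \<infinity>" for ys
    proof -
      obtain c where c: "g ys = ereal c" using finite[OF fin] by blast
      show ?thesis using affine_minorant_le[OF zb, of ys c] c by simp
    qed
    then have "blinfun_apply xes z - (- b) \<le> r"
      by (rule conj_sub)
    with \<open>r < blinfun_apply xes z + b\<close> show False by simp
  qed
  then have "g xes < \<infinity>"
    by (rule order_le_less_trans) simp
  then obtain c where c: "g xes = ereal c"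
    using finite by blast
  have "r \<le> real_of_ereal (g xes)"
    using conj_at[OF \<open>g xes < \<infinity>\<close>] by simp
  with \<open>g xes \<le> ereal r\<close> show gxes: "g xes = ereal r"
    using c by simp
  show "xe \<in> eps_subdiff_X g 0 xes"
    unfolding eps_subdiff_X_def
  proof (intro CollectI allI)
    fix ys
    show "ereal (blinfun_apply (ys - xes) xe) \<le> g ys - g xes + ereal 0"
    proof (cases "g ys < \<infinity>")
      case True
      then obtain d where d: "g ys = ereal d"
        using finite by blast
      then show ?thesis
        using conj_at[OF True] gxes by (simp add: blinfun.diff_left)
    next
      case False
      then show ?thesis using gxes by simp
    qed
  qed
qed

text \<open>Ekeland's principle is applied in \<open>X\<close> to the conjugate
  \<open>g\<^sup>* - x0s\<close> (a supremum of continuous affine functions), with slope \<open>\<surd>\<epsilon>\<close>; the resulting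
  minimality is turned into a subgradient \<open>L\<close> of norm at most \<open>\<surd>\<epsilon>\<close> by separation.\<close>

theorem brondsted_rockafellar:
  fixes g :: "('a::banach \<Rightarrow>\<^sub>L real) \<Rightarrow> ereal"
  assumes proper: "proper_fun g" and cvx: "convex_efun g" and lsc: "weak_star_lsc g"
    and "\<epsilon> > 0" and x0s: "x0s \<in> edom g" and x0: "x0 \<in> eps_subdiff_X g \<epsilon> x0s"
  obtains xes xe where "xes \<in> edom g" and "xe \<in> eps_subdiff_X g 0 xes"
    and "norm (xes - x0s) \<le> sqrt \<epsilon>" and "norm (xe - x0) \<le> sqrt \<epsilon>"
proof -
  have nm: "g y \<noteq> -\<infinity>" for y
    using proper unfolding proper_fun_def by auto
  define D where "D = edom g"
  define G where "G y = real_of_ereal (g y)" for y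
  have gD: "g y = ereal (G y)" if "y \<in> D" for y
    using that nm[of y] unfolding D_def edom_def G_def by (cases "g y") auto
  have x0sD: "x0s \<in> D"
    using x0s unfolding D_def .
  define h where "h ys x = blinfun_apply (ys - x0s) x - G ys" for ys x
  obtain xe v where dist: "dist xe x0 \<le> \<epsilon> / sqrt \<epsilon>" and "- G x0s \<le> v"
    and hv: "\<And>ys. ys \<in> D \<Longrightarrow> h ys xe \<le> v"
    and slope: "\<And>x t. (\<And>ys. ys \<in> D \<Longrightarrow> h ys x \<le> t) \<Longrightarrow> v - sqrt \<epsilon> * dist x xe \<le> t"
  proof (rule ekeland_sup_family[where I = D and h = h and m = "- G x0s" and e = \<epsilon> and l = "sqrt \<epsilon>"])
    show "continuous_on UNIV (h ys)" if "ys \<in> D" for ys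
      unfolding h_def by (intro continuous_on_diff continuous_on_const
          linear_continuous_on[OF blinfun.bounded_linear_right])
    show "\<exists>ys\<in>D. - G x0s \<le> h ys x" for x
      using x0sD unfolding h_def by (intro bexI[where x = x0s]) auto
    show "h ys x0 \<le> - G x0s + \<epsilon>" if "ys \<in> D" for ys
      using eps_subdiff_X_D[OF x0 gD[OF x0sD] gD[OF that]] unfolding h_def by simp
  qed (use \<open>\<epsilon> > 0\<close> that in auto)
  define A where "A = {(x, t). \<forall>ys\<in>D. blinfun_apply (ys - x0s) x - (v - h ys xe) \<le> t}"
  have memA: "(x, t) \<in> A \<longleftrightarrow> (\<forall>ys\<in>D. h ys (x + xe) \<le> t + v)" for x t
    unfolding A_def h_def by (auto simp: blinfun.add_right)
  have convA: "convex A"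
    unfolding A_def
    by (rule convex_epigraph_sup_blinfun[where I = D and f = "\<lambda>ys. ys - x0s" and c = "\<lambda>ys. v - h ys xe"])
  have A0: "(0, 0) \<in> A"
    unfolding memA using hv by simp
  have "0 \<le> sqrt \<epsilon>"
    using \<open>\<epsilon> > 0\<close> by simp
  obtain L :: "'a \<Rightarrow>\<^sub>L real" where "norm L \<le> sqrt \<epsilon>"
    and L: "\<And>x t. (x, t) \<in> A \<Longrightarrow> blinfun_apply L x \<le> t"
  proof (rule linear_minorant_above_cone[OF convA A0 \<open>0 \<le> sqrt \<epsilon>\<close>])
    show "- sqrt \<epsilon> * norm x \<le> t" if "(x, t) \<in> A" for x t
    proof -
      have "v - sqrt \<epsilon> * dist (x + xe) xe \<le> t + v"
        using that unfolding memA by (intro slope) auto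
      then show ?thesis by (simp add: dist_norm)
    qed
  qed (rule that)
  define xes where "xes = x0s + L"
  define r where "r = blinfun_apply L xe - v"
  have conj_at: "blinfun_apply ys xe - real_of_ereal (g ys) \<le> blinfun_apply xes xe - r"
    if "g ys < \<infinity>" for ys
    using hv[of ys] that unfolding D_def edom_def G_def h_def xes_def r_def
    by (simp add: blinfun.add_left blinfun.diff_left)
  have conj_sub: "blinfun_apply xes x - t \<le> r"
    if "\<And>ys. g ys < \<infinity> \<Longrightarrow> blinfun_apply ys x - real_of_ereal (g ys) \<le> t" for x t
  proof -
    have "(x - xe, t - blinfun_apply x0s x - v) \<in> A"
      unfolding memA
    proof
      fix ys assume "ys \<in> D"
      then have "blinfun_apply ys x - G ys \<le> t"
        using that unfolding D_def edom_def G_def by simp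
      then show "h ys (x - xe + xe) \<le> t - blinfun_apply x0s x - v + v"
        unfolding h_def by (simp add: blinfun.diff_left)
    qed
    from L[OF this] show ?thesis
      unfolding xes_def r_def by (simp add: blinfun.add_left blinfun.diff_right)
  qed
  have "g x0s < \<infinity>"
    using x0s unfolding edom_def by simp
  note conjugate = eps_subdiff_X_of_conjugate_subgradient[OF cvx lsc nm
      affine_minorant_of_eps_subdiff_X[OF x0 gD[OF x0sD]] \<open>g x0s < \<infinity>\<close> conj_at conj_sub]
  have "xe \<in> eps_subdiff_X g 0 xes"
    by (rule conjugate(2))
  moreover have "xes \<in> edom g"
    using conjugate(1) unfolding edom_def by simp
  moreover have "norm (xes - x0s) \<le> sqrt \<epsilon>"
    unfolding xes_def using \<open>norm L \<le> sqrt \<epsilon>\<close> by simp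
  moreover have "norm (xe - x0) \<le> sqrt \<epsilon>"
    using dist \<open>\<epsilon> > 0\<close> by (simp add: dist_norm real_div_sqrt)
  ultimately show thesis using that by blast
qed

lemma eps_subdiff_X_near_subgradient:
  fixes g :: "('a::real_normed_vector \<Rightarrow>\<^sub>L real) \<Rightarrow> ereal"
  assumes x0: "x0 \<in> eps_subdiff_X g \<epsilon> x0s" and xe: "xe \<in> eps_subdiff_X g 0 xes"
    and a: "g x0s = ereal a" and b: "g xes = ereal b" and "\<epsilon> > 0"
    and dxes: "norm (xes - x0s) \<le> sqrt \<epsilon>" and dxe: "norm (xe - x0) \<le> sqrt \<epsilon>"
  shows "\<bar>blinfun_apply (xes - x0s) (xe - x0)\<bar> \<le> \<epsilon>"
    and "x0 \<in> eps_subdiff_X g (2 * \<epsilon>) xes"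
    and "\<bar>b - a\<bar> \<le> sqrt \<epsilon> * norm x0 + 2 * \<epsilon>"
proof -
  have "0 \<le> sqrt \<epsilon>"
    using \<open>\<epsilon> > 0\<close> by simp
  have bound: "\<bar>blinfun_apply (xes - x0s) x\<bar> \<le> sqrt \<epsilon> * norm x" for x
    using order_trans[OF norm_blinfun mult_right_mono[OF dxes norm_ge_zero]] by simp
  show cross: "\<bar>blinfun_apply (xes - x0s) (xe - x0)\<bar> \<le> \<epsilon>"
    using order_trans[OF bound[of "xe - x0"] mult_left_mono[OF dxe \<open>0 \<le> sqrt \<epsilon>\<close>]] \<open>\<epsilon> > 0\<close> by simp
  note rebase = eps_subdiff_X_rebase[OF x0 xe a b]
  have "\<epsilon> + blinfun_apply (xes - x0s) (xe - x0) \<le> 2 * \<epsilon>"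
    using cross by (simp add: abs_le_iff)
  then show "x0 \<in> eps_subdiff_X g (2 * \<epsilon>) xes"
    using rebase(1) eps_subdiff_X_mono by blast
  show "\<bar>b - a\<bar> \<le> sqrt \<epsilon> * norm x0 + 2 * \<epsilon>"
    using rebase(2,3) bound[of x0] cross by (simp add: blinfun.diff_right abs_le_iff)
qed

theorem mainTheorem2:
  fixes g :: "('a::banach \<Rightarrow>\<^sub>L real) \<Rightarrow> ereal"
    and \<epsilon> \<beta> :: real and x0s :: "'a \<Rightarrow>\<^sub>L real" and x0 :: 'a
  assumes "proper_fun g" and "convex_efun g" and "weak_star_lsc g"
    and "\<epsilon> > 0" and "\<beta> \<ge> 0"
    and "x0s \<in> edom g" and "x0 \<in> eps_subdiff_X g \<epsilon> x0s"
  shows "\<exists>xes \<in> edom g. \<exists>xe :: 'a.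
      xe \<in> eps_subdiff_X g 0 xes
    \<and> norm (xes - x0s) \<le> sqrt \<epsilon> * (1 + \<beta> * norm x0s)
    \<and> \<bar>real_of_ereal (g xes) - real_of_ereal (g x0s)\<bar>
        \<le> sqrt \<epsilon> * (norm x0 + \<beta> * \<bar>blinfun_apply x0s x0\<bar>) + 2 * \<epsilon>
    \<and> norm (xe - x0) \<le> sqrt \<epsilon>
    \<and> (\<forall>xs :: 'a \<Rightarrow>\<^sub>L real. \<bar>blinfun_apply xs xe - blinfun_apply xs x0\<bar> \<le> sqrt \<epsilon> * norm xs)
    \<and> x0 \<in> eps_subdiff_X g (2 * \<epsilon>) xes
    \<and> \<bar>blinfun_apply (xes - x0s) (xe - x0)\<bar> \<le> \<epsilon>"
proof -
  obtain xes xe where xes: "xes \<in> edom g" and xe: "xe \<in> eps_subdiff_X g 0 xes"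
    and dxes: "norm (xes - x0s) \<le> sqrt \<epsilon>" and dxe: "norm (xe - x0) \<le> sqrt \<epsilon>"
    by (rule brondsted_rockafellar[OF assms(1-4,6,7)]) (rule that)
  have finite: "\<exists>a. g y = ereal a" if "y \<in> edom g" for y
    using that assms(1) unfolding edom_def proper_fun_def by (cases "g y") auto
  obtain a b where a: "g x0s = ereal a" and b: "g xes = ereal b"
    using finite[OF assms(6)] finite[OF xes] by blast
  note near = eps_subdiff_X_near_subgradient[OF assms(7) xe a b assms(4) dxes dxe]
  have "0 \<le> sqrt \<epsilon> * (\<beta> * norm x0s)"
    using assms(4,5) by (simp add: mult_nonneg_nonneg)
  with dxes have ii: "norm (xes - x0s) \<le> sqrt \<epsilon> * (1 + \<beta> * norm x0s)"
    by (simp add: distrib_left)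
  have "0 \<le> sqrt \<epsilon> * (\<beta> * \<bar>blinfun_apply x0s x0\<bar>)"
    using assms(4,5) by (simp add: mult_nonneg_nonneg)
  with near(3) have iii: "\<bar>real_of_ereal (g xes) - real_of_ereal (g x0s)\<bar>
      \<le> sqrt \<epsilon> * (norm x0 + \<beta> * \<bar>blinfun_apply x0s x0\<bar>) + 2 * \<epsilon>"
    using a b by (simp add: distrib_left)
  have v: "\<bar>blinfun_apply xs xe - blinfun_apply xs x0\<bar> \<le> sqrt \<epsilon> * norm xs" for xs :: "'a \<Rightarrow>\<^sub>L real"
    using order_trans[OF norm_blinfun mult_left_mono[OF dxe norm_ge_zero[of xs]]]
    by (simp add: blinfun.diff_right mult.commute)
  show ?thesis
    using xes xe ii iii dxe v near(1,2) by blast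
qed

end
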